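(* Let $0<\beta<2$, $d\ge2$, and let $u_\varepsilon$ be as below. Define $v_\varepsilon(x_1,\dots,x_d):=u_\varepsilon(x_1)$. Then there exist constants $C_2,C_3>0$ independent of $\varepsilon$ such that \[\mathcal{L}v_\varepsilon(0)\ge\frac{C_2}{\varepsilon},\qquad 0<\Gamma_2(v_\varepsilon)(0)\le\frac{C_3}{\varepsilon}\] for all $\varepsilon>0$ small enough. In particular, for every $\mu>0$ there exists $v$ with $0<\Gamma_2(v)(0)<\mu(\mathcal{L}v(0))^2<\infty$.
   Context: $u_\varepsilon$: fix $\Lambda>0$, $\delta>0$ with $\beta+\delta>1$; for $0<\varepsilon<\beta/2$ (and $\varepsilon<\frac{\beta-1}{2}$ if $\beta>1$), $u_\varepsilon\in C^1(\mathbb{R})$ is even with $u_\varepsilon(x)=|x|^{\beta-\varepsilon}$ for $|x|\ge1$ and $u_\varepsilon(x)=\phi(x)$ for $|x|<1$, where $0\le\phi(x)\le\Lambda|x|^{\beta+\delta}$ and $|\phi'(x)|\le\Lambda|x|^{\beta+\delta-1}$ for $|x|\le1$. On $\mathbb{R}^d$: $c_{\beta,d}=\frac{2^\beta\Gamma(\frac{d+\beta}{2})}{\pi^{d/2}|\Gamma(-\frac{\beta}{2})|}$, $\mathcal{L}u(x)=c_{\beta,d}\int_{\mathbb{R}^d}\frac{u(x+h)-2u(x)+u(x-h)}{|h|^{d+\beta}}dh$, $\Gamma_2(u)(x)=c_{\beta,d}^2\int_{\mathbb{R}^d}\int_{\mathbb{R}^d}\frac{[u(x+h+\sigma)-u(x+h)-u(x+\sigma)+u(x)]^2}{|h|^{d+\beta}|\sigma|^{d+\beta}}dh\,d\sigma$.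 *)

theory Defs
  imports "HOL-Analysis.Analysis"
begin

definition c_const :: "real \<Rightarrow> nat \<Rightarrow> real" where
  "c_const \<beta> d = 2 powr \<beta> * Gamma ((real d + \<beta>) / 2)
      / (pi powr (real d / 2) * \<bar>Gamma (- \<beta> / 2)\<bar>)"

definition fracL :: "real \<Rightarrow> (real^'d \<Rightarrow> real) \<Rightarrow> real^'d \<Rightarrow> real" where
  "fracL \<beta> u x = c_const \<beta> CARD('d) *
     (\<integral>h. (u (x + h) - 2 * u x + u (x - h)) / norm h powr (real CARD('d) + \<beta>) \<partial>lborel)"

definition Gamma2 :: "real \<Rightarrow> (real^'d \<Rightarrow> real) \<Rightarrow> real^'d \<Rightarrow> real" where
  "Gamma2 \<beta> u x = (c_const \<beta> CARD('d))\<^sup>2 *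
     (\<integral>p. (case p of (h, \<sigma>) \<Rightarrow>
        (u (x + h + \<sigma>) - u (x + h) - u (x + \<sigma>) + u x)\<^sup>2
        / (norm h powr (real CARD('d) + \<beta>) * norm \<sigma> powr (real CARD('d) + \<beta>)))
      \<partial>(lborel \<Otimes>\<^sub>M lborel))"

end

theory Submission
  imports Defs
begin

text \<open>For v(x) = u(x_i) both operators at 0 only see one-dimensional data. The kernel
  |h|^-(d+\<beta>) is homogeneous, so integrating a function of h_i against it gives a fixed multiple
  \<kappa> of its integral against |t|^-(1+\<beta>); averaging the dilation identity over dilations moves
  the scaling onto the line. As u is even with u(0) = 0, L v(0) = c \<kappa> \<integral> 2 u(t) |t|^-(1+\<beta>) dt,
  and the tail t^-(1+\<epsilon>) of this integrand makes it at least 2 c \<kappa> / \<epsilon>.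
  In \<Gamma>_2(v)(0) = c^2 \<kappa>^2 \<integral>\<integral> (u(a+b) - u(a) - u(b))^2 |a|^-(1+\<beta>) |b|^-(1+\<beta>) the second
  difference is bounded, for |a| \<le> |b|, by the size of u(a), by |a| times the size of u' near b
  when |a| \<le> |b|/2, and by the size of u(b) when |b| \<le> 2|a|; each piece contributes
  O(1/\<delta> + 1/\<epsilon>). The double integral is positive because t^(\<beta>-\<epsilon>) is strictly concave or
  convex on t \<ge> 1. Hence \<Gamma>_2(v)(0) / (L v(0))^2 = O(\<epsilon>).\<close>

definition stable_kernel :: "real \<Rightarrow> real^'d \<Rightarrow> ennreal" where
  "stable_kernel \<beta> h = ennreal (1 / norm h powr (real CARD('d) + \<beta>))"

definition stable_kernel1 :: "real \<Rightarrow> real \<Rightarrow> ennreal" where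
  "stable_kernel1 \<beta> t = ennreal (1 / \<bar>t\<bar> powr (1 + \<beta>))"

lemma stable_kernel_measurable [measurable]:
  "stable_kernel \<beta> \<in> borel_measurable borel" "stable_kernel \<beta> \<in> borel_measurable lborel"
  unfolding stable_kernel_def by measurable

lemma stable_kernel1_measurable [measurable]: "stable_kernel1 \<beta> \<in> borel_measurable borel"
  unfolding stable_kernel1_def by measurable

lemma vec_nth_measurable [measurable]: "(\<lambda>x::real^'d. x $ i) \<in> borel_measurable borel"
  by (intro borel_measurable_continuous_onI continuous_intros)

lemma stable_kernel_scaleR:
  fixes y :: "real^'d"
  assumes "c \<noteq> 0"
  shows "stable_kernel \<beta> ((1/c) *\<^sub>R y) = ennreal (\<bar>c\<bar> powr (real CARD('d) + \<beta>)) * stable_kernel \<beta> y"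
proof -
  have "norm ((1/c) *\<^sub>R y) = norm y / \<bar>c\<bar>" by simp
  then show ?thesis unfolding stable_kernel_def using assms
    by (cases "y = 0") (auto simp: powr_divide ennreal_mult'[symmetric] divide_simps)
qed

lemma nn_integral_stable_kernel_dilate:
  fixes f :: "real^'d \<Rightarrow> ennreal"
  assumes f [measurable]: "f \<in> borel_measurable borel" and c: "c \<noteq> 0"
  shows "(\<integral>\<^sup>+h. f (c *\<^sub>R h) * stable_kernel \<beta> h \<partial>lborel)
       = ennreal (\<bar>c\<bar> powr \<beta>) * (\<integral>\<^sup>+h. f h * stable_kernel \<beta> h \<partial>lborel)"
proof -
  define G where "G y = f y * stable_kernel \<beta> ((1/c) *\<^sub>R y)" for y
  have [measurable]: "G \<in> borel_measurable borel" unfolding G_def by measurable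
  have "(\<integral>\<^sup>+y. G y \<partial>lborel) = (\<integral>\<^sup>+x. ennreal (\<bar>c\<bar>^CARD('d)) * G (c *\<^sub>R x) \<partial>lborel)"
    by (subst lborel_affine[OF c, of 0]) (simp add: nn_integral_density nn_integral_distr)
  also have "\<dots> = ennreal (\<bar>c\<bar>^CARD('d)) * (\<integral>\<^sup>+x. f (c *\<^sub>R x) * stable_kernel \<beta> x \<partial>lborel)"
    using c by (subst nn_integral_cmult) (auto simp: G_def)
  finally have substitution: "(\<integral>\<^sup>+y. G y \<partial>lborel)
      = ennreal (\<bar>c\<bar>^CARD('d)) * (\<integral>\<^sup>+x. f (c *\<^sub>R x) * stable_kernel \<beta> x \<partial>lborel)" .
  have "(\<integral>\<^sup>+y. G y \<partial>lborel)
      = ennreal (\<bar>c\<bar> powr (real CARD('d) + \<beta>)) * (\<integral>\<^sup>+h. f h * stable_kernel \<beta> h \<partial>lborel)"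
    unfolding G_def using c
    by (subst nn_integral_cmult[symmetric]) (auto simp: stable_kernel_scaleR mult_ac)
  also have "ennreal (\<bar>c\<bar> powr (real CARD('d) + \<beta>)) = ennreal (\<bar>c\<bar>^CARD('d)) * ennreal (\<bar>c\<bar> powr \<beta>)"
    using c by (simp add: powr_add powr_realpow ennreal_mult')
  finally show ?thesis
    using substitution c by (simp add: mult.assoc ennreal_mult_cancel_left)
qed

lemma nn_integral_stable_kernel_annulus:
  assumes r: "r > 0" and \<beta>: "\<beta> > 0"
  shows "(\<integral>\<^sup>+h. indicator {h::real^'d. r \<le> norm h \<and> norm h < 2 * r} h * stable_kernel \<beta> h \<partial>lborel) < \<infinity>"
proof -
  let ?c = "ennreal (1 / r powr (real CARD('d) + \<beta>))"
  have "(\<integral>\<^sup>+h. indicator {h::real^'d. r \<le> norm h \<and> norm h < 2 * r} h * stable_kernel \<beta> h \<partial>lborel)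
      \<le> (\<integral>\<^sup>+h. ?c * indicator (cball (0::real^'d) (2*r)) h \<partial>lborel)"
  proof (intro nn_integral_mono)
    fix h :: "real^'d"
    show "indicator {h::real^'d. r \<le> norm h \<and> norm h < 2 * r} h * stable_kernel \<beta> h
        \<le> ?c * indicator (cball 0 (2 * r)) h"
    proof (cases "r \<le> norm h \<and> norm h < 2 * r")
      case True
      then have "1 / norm h powr (real CARD('d) + \<beta>) \<le> 1 / r powr (real CARD('d) + \<beta>)"
        using r \<beta> by (intro divide_left_mono mult_pos_pos powr_mono2) auto
      then show ?thesis using True unfolding stable_kernel_def by (auto simp: indicator_def)
    qed simp
  qed
  also have "\<dots> = ?c * emeasure lborel (cball (0::real^'d) (2*r))"
    by (subst nn_integral_cmult) (auto intro!: borel_measurable_indicator)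
  also have "\<dots> < \<infinity>"
    using emeasure_bounded_finite[of "cball (0::real^'d) (2*r)"] by (simp add: ennreal_mult_less_top less_top)
  finally show ?thesis .
qed

lemma nn_integral_stable_kernel_outside_ball:
  assumes r: "r > 0" and \<beta>: "\<beta> > 0"
  shows "(\<integral>\<^sup>+h. indicator {h::real^'d. r \<le> norm h} h * stable_kernel \<beta> h \<partial>lborel) < \<infinity>"
proof -
  define E where "E k = {h::real^'d. r * 2^k \<le> norm h \<and> norm h < r * 2^(Suc k)}" for k :: nat
  have [measurable]: "E k \<in> sets borel" for k unfolding E_def by measurable
  define I where "I k = (\<integral>\<^sup>+h. indicator (E k) h * stable_kernel \<beta> h \<partial>lborel)" for k
  have cover: "indicator {h::real^'d. r \<le> norm h} h * stable_kernel \<beta> h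
      \<le> (\<Sum>k. indicator (E k) h * stable_kernel \<beta> h)" for h
  proof (cases "r \<le> norm h")
    case True
    define k where "k = nat \<lfloor>log 2 (norm h / r)\<rfloor>"
    have pos: "norm h / r \<ge> 1" using True r by simp
    then have "log 2 (norm h / r) \<ge> 0" by simp
    then have "real k \<le> log 2 (norm h / r)" "log 2 (norm h / r) < real k + 1"
      unfolding k_def by linarith+
    then have "2 powr real k \<le> norm h / r" "norm h / r < 2 powr (real k + 1)"
      using pos by (simp_all add: le_log_iff log_less_iff)
    then have "h \<in> E k"
      using r by (simp add: E_def powr_realpow[symmetric] powr_add field_simps)
    then show ?thesis
      using True ennreal_suminf_lessD[of "\<lambda>k. indicator (E k) h * stable_kernel \<beta> h" _ k]
      by (metis indicator_simps(1) mem_Collect_eq not_le order.irrefl)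
  qed simp
  have geometric: "I k = ennreal ((1/2) powr \<beta>)^k * I 0" for k
  proof -
    have "I k = (\<integral>\<^sup>+h. indicator (E 0) ((1/2^k) *\<^sub>R h) * stable_kernel \<beta> h \<partial>lborel)"
      unfolding I_def by (intro nn_integral_cong) (auto simp: E_def indicator_def field_simps)
    also have "\<dots> = ennreal (\<bar>1/2^k\<bar> powr \<beta>) * I 0"
      unfolding I_def by (rule nn_integral_stable_kernel_dilate) auto
    also have "ennreal (\<bar>1/2^k\<bar> powr \<beta>) = ennreal ((1/2) powr \<beta>)^k"
      by (simp add: ennreal_power powr_realpow[symmetric] powr_powr mult.commute powr_divide)
    finally show ?thesis .
  qed
  have I0_finite: "I 0 < \<infinity>"
    unfolding I_def E_def using nn_integral_stable_kernel_annulus[OF r \<beta>] by (simp add: mult.commute)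
  have "(\<integral>\<^sup>+h. indicator {h::real^'d. r \<le> norm h} h * stable_kernel \<beta> h \<partial>lborel) \<le> (\<Sum>k. I k)"
  proof -
    have "(\<integral>\<^sup>+h. indicator {h::real^'d. r \<le> norm h} h * stable_kernel \<beta> h \<partial>lborel)
        \<le> (\<integral>\<^sup>+h. (\<Sum>k. indicator (E k) h * stable_kernel \<beta> h) \<partial>lborel)"
      by (intro nn_integral_mono cover)
    then show ?thesis unfolding I_def by (subst (asm) nn_integral_suminf) auto
  qed
  also have "\<dots> = (\<Sum>k. ennreal ((1/2) powr \<beta>)^k * I 0)"
    by (rule arg_cong[where f = suminf]) (rule ext, rule geometric)
  also have "\<dots> = (\<Sum>k. ennreal ((1/2) powr \<beta>)^k) * I 0"
    by (rule ennreal_suminf_multc)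
  also have "(\<Sum>k. ennreal ((1/2) powr \<beta>)^k) = ennreal (\<Sum>k. ((1/2) powr \<beta>)^k)"
    using \<beta> by (simp add: ennreal_power suminf_ennreal2 powr01_less_one)
  also have "\<dots> * I 0 < \<infinity>" using I0_finite by (simp add: ennreal_mult_less_top)
  finally show ?thesis .
qed

lemma ennreal_inverse_mult_real:
  "0 \<le> a \<Longrightarrow> 0 \<le> b \<Longrightarrow> ennreal (1 / (a * b)) = ennreal (1 / a) * ennreal (1 / b)"
  by (simp add: ennreal_mult'[symmetric])

lemma nn_integral_lborel_dilate:
  fixes f g :: "real \<Rightarrow> ennreal"
  assumes [measurable]: "f \<in> borel_measurable borel" "g \<in> borel_measurable borel" and t: "t \<noteq> 0"
  shows "(\<integral>\<^sup>+l. f l * g (l * t) \<partial>lborel) = (\<integral>\<^sup>+s. ennreal (1 / \<bar>t\<bar>) * f (s / t) * g s \<partial>lborel)"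
proof -
  have "(\<integral>\<^sup>+s. ennreal (1 / \<bar>t\<bar>) * f (s / t) * g s \<partial>lborel)
      = ennreal \<bar>t\<bar> * (\<integral>\<^sup>+l. ennreal (1 / \<bar>t\<bar>) * (f l * g (l * t)) \<partial>lborel)"
    using t by (subst nn_integral_real_affine[where c = t and t = 0]) (auto simp: mult_ac)
  also have "\<dots> = (\<integral>\<^sup>+l. f l * g (l * t) \<partial>lborel)"
    using t by (subst nn_integral_cmult) (auto simp: mult.assoc[symmetric] ennreal_mult'[symmetric])
  finally show ?thesis ..
qed

lemma nn_integral_stable_kernel_coordinate_weight:
  fixes \<phi> :: "real \<Rightarrow> ennreal" and i :: "'d::finite"
  assumes s: "s \<noteq> 0" and [measurable]: "\<phi> \<in> borel_measurable borel"
  shows "(\<integral>\<^sup>+h. ennreal (1 / \<bar>h$i\<bar>) * \<phi> (s / h$i) * stable_kernel \<beta> (h::real^'d) \<partial>lborel)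
       = (\<integral>\<^sup>+h. ennreal (1 / \<bar>h$i\<bar>) * \<phi> (1 / h$i) * stable_kernel \<beta> (h::real^'d) \<partial>lborel)
         * stable_kernel1 \<beta> s"
    (is "(\<integral>\<^sup>+h. ?f h * ?K h \<partial>lborel) = ?c2 * _")
proof -
  have "ennreal (\<bar>s\<bar> powr \<beta>) * (\<integral>\<^sup>+h. ?f h * ?K h \<partial>lborel) = (\<integral>\<^sup>+h. ?f (s *\<^sub>R h) * ?K h \<partial>lborel)"
    using s by (intro nn_integral_stable_kernel_dilate[symmetric]) auto
  also have "\<dots> = (\<integral>\<^sup>+h. ennreal (1/\<bar>s\<bar>) * (ennreal (1 / \<bar>h$i\<bar>) * \<phi> (1 / h$i) * ?K h) \<partial>lborel)"
    using s by (intro nn_integral_cong) (auto simp: ennreal_inverse_mult_real mult_ac abs_mult)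
  also have "\<dots> = ennreal (1/\<bar>s\<bar>) * ?c2"
    by (subst nn_integral_cmult) auto
  finally have scaled: "ennreal (\<bar>s\<bar> powr \<beta>) * (\<integral>\<^sup>+h. ?f h * ?K h \<partial>lborel) = ennreal (1/\<bar>s\<bar>) * ?c2" .
  have "(\<integral>\<^sup>+h. ?f h * ?K h \<partial>lborel)
      = ennreal (1 / \<bar>s\<bar> powr \<beta>) * (ennreal (\<bar>s\<bar> powr \<beta>) * (\<integral>\<^sup>+h. ?f h * ?K h \<partial>lborel))"
    using s by (simp add: mult.assoc[symmetric] ennreal_mult'[symmetric])
  also have "\<dots> = ennreal (1 / \<bar>s\<bar> powr \<beta>) * (ennreal (1/\<bar>s\<bar>) * ?c2)"
    by (simp only: scaled)
  also have "\<dots> = ?c2 * stable_kernel1 \<beta> s"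
    using s unfolding stable_kernel1_def by (simp add: powr_add ennreal_inverse_mult_real mult_ac)
  finally show ?thesis .
qed

text \<open>Integrating the dilation identity against a weight \<open>\<phi>\<close> and exchanging the order of
  integration moves the dilation from the coordinate \<open>h $ i\<close> onto the one-dimensional variable.\<close>

lemma nn_integral_stable_kernel_coordinate_averaged:
  fixes g \<phi> :: "real \<Rightarrow> ennreal" and i :: "'d::finite"
  assumes g [measurable]: "g \<in> borel_measurable borel" and g0: "g 0 = 0"
    and \<phi> [measurable]: "\<phi> \<in> borel_measurable borel"
  shows "(\<integral>\<^sup>+h. g (h$i) * stable_kernel \<beta> (h::real^'d) \<partial>lborel) * (\<integral>\<^sup>+l. \<phi> l * ennreal (\<bar>l\<bar> powr \<beta>) \<partial>lborel)
       = (\<integral>\<^sup>+h. ennreal (1 / \<bar>h$i\<bar>) * \<phi> (1 / h$i) * stable_kernel \<beta> (h::real^'d) \<partial>lborel)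
         * (\<integral>\<^sup>+t. g t * stable_kernel1 \<beta> t \<partial>lborel)"
    (is "?T * ?c1 = ?c2 * ?S")
proof -
  let ?K = "stable_kernel \<beta> :: real^'d \<Rightarrow> ennreal"
  have dilate_h: "(\<integral>\<^sup>+h. g (l * h$i) * ?K h \<partial>lborel) = ennreal (\<bar>l\<bar> powr \<beta>) * ?T" for l
  proof (cases "l = 0")
    case False
    then show ?thesis
      using nn_integral_stable_kernel_dilate[of "\<lambda>x. g (x$i)" l \<beta>] by simp
  qed (simp add: g0)
  have dilate_t: "(\<integral>\<^sup>+l. \<phi> l * g (l * t) \<partial>lborel)
      = (\<integral>\<^sup>+s. ennreal (1 / \<bar>t\<bar>) * \<phi> (s / t) * g s \<partial>lborel)" for t :: real
    by (cases "t = 0") (simp_all add: g0 nn_integral_lborel_dilate)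
  have dilate_s: "(\<integral>\<^sup>+h. ennreal (1 / \<bar>h$i\<bar>) * \<phi> (s / h$i) * ?K h \<partial>lborel) = ?c2 * stable_kernel1 \<beta> s"
    if "s \<noteq> 0" for s
    using that by (rule nn_integral_stable_kernel_coordinate_weight) measurable
  have "?T * ?c1 = (\<integral>\<^sup>+l. \<phi> l * (ennreal (\<bar>l\<bar> powr \<beta>) * ?T) \<partial>lborel)"
    by (subst nn_integral_cmult[symmetric]) (auto simp: mult_ac)
  also have "\<dots> = (\<integral>\<^sup>+l. \<phi> l * (\<integral>\<^sup>+h. g (l * h$i) * ?K h \<partial>lborel) \<partial>lborel)"
    by (simp only: dilate_h)
  also have "\<dots> = (\<integral>\<^sup>+l. (\<integral>\<^sup>+h. \<phi> l * g (l * h$i) * ?K h \<partial>lborel) \<partial>lborel)"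
    by (intro nn_integral_cong, subst nn_integral_cmult[symmetric]) (auto simp: mult_ac)
  also have "\<dots> = (\<integral>\<^sup>+h. (\<integral>\<^sup>+l. \<phi> l * g (l * h$i) * ?K h \<partial>lborel) \<partial>lborel)"
    by (rule pair_sigma_finite.Fubini'[symmetric]) (unfold_locales, measurable)
  also have "\<dots> = (\<integral>\<^sup>+h. (\<integral>\<^sup>+s. ?K h * (ennreal (1 / \<bar>h$i\<bar>) * \<phi> (s / h$i) * g s) \<partial>lborel) \<partial>lborel)"
  proof (rule nn_integral_cong)
    fix h :: "real^'d"
    have "(\<integral>\<^sup>+l. \<phi> l * g (l * h$i) * ?K h \<partial>lborel) = (\<integral>\<^sup>+l. \<phi> l * g (l * h$i) \<partial>lborel) * ?K h"
      by (rule nn_integral_multc) measurable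
    also have "\<dots> = ?K h * (\<integral>\<^sup>+s. ennreal (1 / \<bar>h$i\<bar>) * \<phi> (s / h$i) * g s \<partial>lborel)"
      by (simp add: dilate_t mult.commute)
    also have "\<dots> = (\<integral>\<^sup>+s. ?K h * (ennreal (1 / \<bar>h$i\<bar>) * \<phi> (s / h$i) * g s) \<partial>lborel)"
      by (rule nn_integral_cmult[symmetric]) measurable
    finally show "(\<integral>\<^sup>+l. \<phi> l * g (l * h$i) * ?K h \<partial>lborel)
        = (\<integral>\<^sup>+s. ?K h * (ennreal (1 / \<bar>h$i\<bar>) * \<phi> (s / h$i) * g s) \<partial>lborel)" .
  qed
  also have "\<dots> = (\<integral>\<^sup>+s. (\<integral>\<^sup>+h. ?K h * (ennreal (1 / \<bar>h$i\<bar>) * \<phi> (s / h$i) * g s) \<partial>lborel) \<partial>lborel)"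
    by (rule pair_sigma_finite.Fubini') (unfold_locales, measurable)
  also have "\<dots> = (\<integral>\<^sup>+s. ?c2 * (g s * stable_kernel1 \<beta> s) \<partial>lborel)"
  proof (rule nn_integral_cong)
    fix s :: real
    show "(\<integral>\<^sup>+h. ?K h * (ennreal (1 / \<bar>h$i\<bar>) * \<phi> (s / h$i) * g s) \<partial>lborel) = ?c2 * (g s * stable_kernel1 \<beta> s)"
    proof (cases "s = 0")
      case False
      have "(\<integral>\<^sup>+h. ?K h * (ennreal (1 / \<bar>h$i\<bar>) * \<phi> (s / h$i) * g s) \<partial>lborel)
          = (\<integral>\<^sup>+h. ennreal (1 / \<bar>h$i\<bar>) * \<phi> (s / h$i) * ?K h \<partial>lborel) * g s"
        by (subst nn_integral_multc[symmetric]) (auto simp: mult_ac intro!: nn_integral_cong)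
      with dilate_s[OF False] show ?thesis by (simp add: mult_ac)
    qed (simp add: g0)
  qed
  also have "\<dots> = ?c2 * ?S" by (rule nn_integral_cmult) measurable
  finally show ?thesis .
qed

lemma nn_integral_stable_kernel_slab:
  fixes i :: "'d::finite"
  assumes \<beta>: "\<beta> > 0"
  defines "S \<equiv> {h::real^'d. 1/2 \<le> h$i \<and> h$i \<le> 1}"
  shows "0 < (\<integral>\<^sup>+h. indicator S h * stable_kernel \<beta> h \<partial>lborel)"
    and "(\<integral>\<^sup>+h. indicator S h * stable_kernel \<beta> h \<partial>lborel) < \<infinity>"
proof -
  define c :: "real^'d" where "c = axis i (3/4)"
  have "c = (3/4) *\<^sub>R axis i (1::real)" by (simp add: c_def vec_eq_iff axis_def)
  then have "norm c = 3/4" by simp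
  have "0 < emeasure lborel (ball c (1/4))"
    by (simp add: emeasure_ball)
  also have "\<dots> = (\<integral>\<^sup>+h. indicator (ball c (1/4)) h \<partial>lborel)" by simp
  also have "\<dots> \<le> (\<integral>\<^sup>+h. indicator S h * stable_kernel \<beta> h \<partial>lborel)"
  proof (intro nn_integral_mono)
    fix h :: "real^'d"
    show "indicator (ball c (1/4)) h \<le> indicator S h * stable_kernel \<beta> h"
    proof (cases "h \<in> ball c (1/4)")
      case True
      then have close: "norm (h - c) < 1/4" by (simp add: dist_norm norm_minus_commute)
      moreover have "\<bar>(h - c)$i\<bar> \<le> norm (h - c)" by (rule component_le_norm_cart)
      ultimately have "h \<in> S" by (auto simp: S_def c_def)
      have "norm h \<le> norm c + norm (h - c)" by (metis add.commute diff_add_cancel norm_triangle_ineq)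
      then have "0 < norm h" "norm h \<le> 1"
        using close \<open>norm c = 3/4\<close> \<open>h \<in> S\<close> by (auto simp: S_def)
      then have "1 \<le> stable_kernel \<beta> h"
        using \<beta> unfolding stable_kernel_def by (simp add: powr_le1 field_simps)
      then show ?thesis using True \<open>h \<in> S\<close> by simp
    qed simp
  qed
  finally show "0 < (\<integral>\<^sup>+h. indicator S h * stable_kernel \<beta> h \<partial>lborel)" .
  have "(\<integral>\<^sup>+h. indicator S h * stable_kernel \<beta> h \<partial>lborel)
      \<le> (\<integral>\<^sup>+h. indicator {h::real^'d. 1/2 \<le> norm h} h * stable_kernel \<beta> h \<partial>lborel)"
  proof (intro nn_integral_mono mult_right_mono)
    fix h :: "real^'d"
    have "h$i \<le> norm h" using component_le_norm_cart[of h i] by simp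
    then show "indicator S h \<le> (indicator {h::real^'d. 1/2 \<le> norm h} h :: ennreal)"
      by (auto simp: S_def indicator_def)
  qed simp
  also have "\<dots> < \<infinity>" using \<beta> by (intro nn_integral_stable_kernel_outside_ball) auto
  finally show "(\<integral>\<^sup>+h. indicator S h * stable_kernel \<beta> h \<partial>lborel) < \<infinity>" .
qed

definition stable_kernel_marginal :: "real \<Rightarrow> 'd::finite \<Rightarrow> real \<Rightarrow> bool" where
  "stable_kernel_marginal \<beta> i \<kappa> \<longleftrightarrow> (\<forall>g. g \<in> borel_measurable borel \<longrightarrow> g 0 = 0 \<longrightarrow>
     (\<integral>\<^sup>+h. g (h$i) * stable_kernel \<beta> (h::real^'d) \<partial>lborel)
       = ennreal \<kappa> * (\<integral>\<^sup>+t. g t * stable_kernel1 \<beta> t \<partial>lborel))"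

text \<open>The weight \<open>\<phi> l = l\<^sup>-\<^sup>\<beta>\<close> on \<open>[1, 2]\<close> normalises the left factor of the averaged identity
  to \<open>1\<close>; the right factor is then comparable to the kernel mass of the slab \<open>1/2 \<le> h $ i \<le> 1\<close>.\<close>

lemma stable_kernel_marginal_exists:
  fixes i :: "'d::finite"
  assumes \<beta>: "\<beta> > 0"
  shows "\<exists>\<kappa> > 0. stable_kernel_marginal \<beta> i \<kappa>"
proof -
  define \<phi> where "\<phi> l = indicator {1..2} l * ennreal (l powr - \<beta>)" for l :: real
  define S where "S = {h::real^'d. 1/2 \<le> h$i \<and> h$i \<le> 1}"
  define c2 where "c2 = (\<integral>\<^sup>+h. ennreal (1 / \<bar>h$i\<bar>) * \<phi> (1 / h$i) * stable_kernel \<beta> (h::real^'d) \<partial>lborel)"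
  have [measurable]: "\<phi> \<in> borel_measurable borel" "S \<in> sets borel"
    unfolding \<phi>_def S_def by measurable
  have weight_on_slab: "ennreal ((1/2) powr \<beta>) * indicator S h \<le> ennreal (1 / \<bar>h$i\<bar>) * \<phi> (1 / h$i)"
    "ennreal (1 / \<bar>h$i\<bar>) * \<phi> (1 / h$i) \<le> 2 * indicator S h" for h :: "real^'d"
  proof -
    have "1 / h$i \<in> {1..2} \<longleftrightarrow> h \<in> S"
      by (auto simp: S_def field_simps le_divide_eq divide_le_eq split: if_splits)
    moreover have "(1/2) powr \<beta> \<le> 1 / \<bar>h$i\<bar> * (1 / h$i) powr - \<beta>"
      "1 / \<bar>h$i\<bar> * (1 / h$i) powr - \<beta> \<le> 2" if "h \<in> S"
    proof -
      have hi: "1/2 \<le> h$i" "h$i \<le> 1" using that by (auto simp: S_def)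
      then have eq: "1 / \<bar>h$i\<bar> * (1 / h$i) powr - \<beta> = h$i powr \<beta> / h$i"
        by (simp add: powr_minus_divide powr_divide)
      have "(1/2) powr \<beta> \<le> h$i powr \<beta>" using hi \<beta> by (intro powr_mono2) auto
      also have "\<dots> \<le> h$i powr \<beta> / h$i" using hi by (simp add: le_divide_eq mult_left_le)
      finally show "(1/2) powr \<beta> \<le> 1 / \<bar>h$i\<bar> * (1 / h$i) powr - \<beta>" by (simp only: eq)
      have "h$i powr \<beta> / h$i \<le> 1 / h$i" using hi \<beta> by (intro divide_right_mono powr_le1) auto
      also have "\<dots> \<le> 2" using hi by (simp add: divide_le_eq)
      finally show "1 / \<bar>h$i\<bar> * (1 / h$i) powr - \<beta> \<le> 2" by (simp only: eq)
    qed
    ultimately show "ennreal ((1/2) powr \<beta>) * indicator S h \<le> ennreal (1 / \<bar>h$i\<bar>) * \<phi> (1 / h$i)"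
      "ennreal (1 / \<bar>h$i\<bar>) * \<phi> (1 / h$i) \<le> 2 * indicator S h"
      unfolding \<phi>_def
      by (auto simp: indicator_def ennreal_mult'[symmetric] simp flip: ennreal_numeral intro!: ennreal_leI)
  qed
  have "0 < ennreal ((1/2) powr \<beta>) * (\<integral>\<^sup>+h. indicator S h * stable_kernel \<beta> h \<partial>lborel)"
    using nn_integral_stable_kernel_slab(1)[OF \<beta>, of i] by (simp add: S_def ennreal_zero_less_mult_iff)
  also have "\<dots> \<le> c2"
    unfolding c2_def using weight_on_slab(1)
    by (subst nn_integral_cmult[symmetric]) (auto simp: mult.assoc[symmetric] intro!: nn_integral_mono mult_right_mono)
  finally have c2_pos: "0 < c2" .
  have "c2 \<le> 2 * (\<integral>\<^sup>+h. indicator S h * stable_kernel \<beta> h \<partial>lborel)"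
    unfolding c2_def using weight_on_slab(2)
    by (subst nn_integral_cmult[symmetric]) (auto simp: mult.assoc[symmetric] intro!: nn_integral_mono mult_right_mono)
  also have "\<dots> < \<infinity>"
    using nn_integral_stable_kernel_slab(2)[OF \<beta>, of i] by (simp add: S_def ennreal_mult_less_top)
  finally have c2_finite: "c2 < \<infinity>" .
  have c1: "(\<integral>\<^sup>+l. \<phi> l * ennreal (\<bar>l\<bar> powr \<beta>) \<partial>lborel) = 1"
  proof -
    have "(\<integral>\<^sup>+l. \<phi> l * ennreal (\<bar>l\<bar> powr \<beta>) \<partial>lborel) = (\<integral>\<^sup>+l. indicator {1..2::real} l \<partial>lborel)"
      unfolding \<phi>_def
      by (intro nn_integral_cong) (auto simp: indicator_def ennreal_mult'[symmetric] powr_add[symmetric])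
    then show ?thesis by simp
  qed
  show ?thesis
  proof (intro exI conjI)
    show "0 < enn2real c2" using c2_pos c2_finite by (simp add: enn2real_positive_iff)
    show "stable_kernel_marginal \<beta> i (enn2real c2)"
      unfolding stable_kernel_marginal_def
    proof (intro allI impI)
      fix g :: "real \<Rightarrow> ennreal" assume "g \<in> borel_measurable borel" "g 0 = 0"
      from nn_integral_stable_kernel_coordinate_averaged[OF this, where \<phi> = \<phi> and i = i and \<beta> = \<beta>]
      show "(\<integral>\<^sup>+h. g (h$i) * stable_kernel \<beta> (h::real^'d) \<partial>lborel)
          = ennreal (enn2real c2) * (\<integral>\<^sup>+t. g t * stable_kernel1 \<beta> t \<partial>lborel)"
        using c1 c2_finite by (simp add: c2_def ennreal_enn2real less_top)
    qed
  qed
qed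

lemma stable_kernel_marginal_pair:
  fixes i :: "'d::finite" and G :: "real \<times> real \<Rightarrow> ennreal"
  assumes marginal: "stable_kernel_marginal \<beta> i \<kappa>"
    and G [measurable]: "G \<in> borel_measurable (borel \<Otimes>\<^sub>M borel)"
    and G0: "\<And>b. G (0, b) = 0" "\<And>a. G (a, 0) = 0"
  shows "(\<integral>\<^sup>+p. G (fst p $ i, snd p $ i) * stable_kernel \<beta> (fst p) * stable_kernel \<beta> (snd p)
            \<partial>(lborel \<Otimes>\<^sub>M (lborel :: (real^'d) measure)))
       = ennreal \<kappa> * ennreal \<kappa> *
         (\<integral>\<^sup>+q. G q * stable_kernel1 \<beta> (fst q) * stable_kernel1 \<beta> (snd q) \<partial>(lborel \<Otimes>\<^sub>M lborel))"
proof -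
  let ?K = "stable_kernel \<beta> :: real^'d \<Rightarrow> ennreal" and ?w = "stable_kernel1 \<beta>"
  have [measurable]: "G \<in> borel_measurable (lborel \<Otimes>\<^sub>M lborel)"
    using G by (simp add: measurable_def space_pair_measure sets_pair_measure)
  note reduce = marginal[unfolded stable_kernel_marginal_def, rule_format]
  define G1 where "G1 a = ennreal \<kappa> * (\<integral>\<^sup>+b. G (a, b) * ?w b \<partial>lborel)" for a
  have [measurable]: "G1 \<in> borel_measurable borel" unfolding G1_def by measurable
  have inner: "(\<integral>\<^sup>+\<sigma>. G (h $ i, \<sigma> $ i) * ?K h * ?K \<sigma> \<partial>lborel) = G1 (h$i) * ?K h" for h :: "real^'d"
  proof -
    have "(\<integral>\<^sup>+\<sigma>. G (h $ i, \<sigma> $ i) * ?K h * ?K \<sigma> \<partial>lborel)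
        = ennreal \<kappa> * (\<integral>\<^sup>+b. ?K h * (G (h$i, b) * ?w b) \<partial>lborel)"
      using reduce[of "\<lambda>b. G (h$i, b) * ?K h"] G0 by (simp add: mult_ac)
    also have "\<dots> = G1 (h$i) * ?K h"
      unfolding G1_def by (subst nn_integral_cmult) (auto simp: mult_ac)
    finally show ?thesis .
  qed
  have outer: "c * G1 a = ennreal \<kappa> * (\<integral>\<^sup>+b. G (a, b) * c * ?w b \<partial>lborel)" for a c
  proof -
    have "c * G1 a = ennreal \<kappa> * (c * (\<integral>\<^sup>+b. G (a, b) * ?w b \<partial>lborel))"
      by (simp add: G1_def mult_ac)
    also have "c * (\<integral>\<^sup>+b. G (a, b) * ?w b \<partial>lborel) = (\<integral>\<^sup>+b. G (a, b) * c * ?w b \<partial>lborel)"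
      by (subst nn_integral_cmult[symmetric]) (auto simp: mult_ac)
    finally show ?thesis .
  qed
  have "(\<integral>\<^sup>+p. G (fst p $ i, snd p $ i) * ?K (fst p) * ?K (snd p) \<partial>(lborel \<Otimes>\<^sub>M lborel))
      = (\<integral>\<^sup>+h. \<integral>\<^sup>+\<sigma>. G (h $ i, \<sigma> $ i) * ?K h * ?K \<sigma> \<partial>lborel \<partial>lborel)"
    by (subst lborel.nn_integral_fst[symmetric]) (auto simp: split_beta')
  also have "\<dots> = (\<integral>\<^sup>+h. G1 (h$i) * ?K h \<partial>lborel)"
    by (simp only: inner)
  also have "\<dots> = ennreal \<kappa> * (\<integral>\<^sup>+a. G1 a * ?w a \<partial>lborel)"
    using reduce[of G1] G0 by (simp add: G1_def)
  also have "(\<integral>\<^sup>+a. G1 a * ?w a \<partial>lborel) = ennreal \<kappa> * (\<integral>\<^sup>+a. \<integral>\<^sup>+b. G (a, b) * ?w a * ?w b \<partial>lborel \<partial>lborel)"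
    by (simp add: mult.commute[of "G1 _"] outer nn_integral_cmult)
  also have "(\<integral>\<^sup>+a. \<integral>\<^sup>+b. G (a, b) * ?w a * ?w b \<partial>lborel \<partial>lborel)
      = (\<integral>\<^sup>+q. G q * ?w (fst q) * ?w (snd q) \<partial>(lborel \<Otimes>\<^sub>M lborel))"
    by (subst lborel.nn_integral_fst[symmetric]) (auto simp: split_beta')
  finally show ?thesis by (simp add: mult_ac)
qed

lemma nn_integral_powr_0_to:
  fixes p r :: real assumes p: "p > -1" and r: "r > 0"
  shows "(\<integral>\<^sup>+t. indicator {0<..r} t * ennreal (t powr p) \<partial>lborel) = ennreal (r powr (p+1) / (p+1))"
proof -
  have "((\<lambda>t. t powr p) has_integral (r powr (p+1) / (p+1))) {0..r}"
    using has_integral_powr_from_0[OF p, of r] r by simp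
  then have "((\<lambda>t. if t \<in> {0..r} then t powr p else 0) has_integral (r powr (p+1) / (p+1))) UNIV"
    by (simp only: has_integral_restrict_UNIV)
  moreover have "(\<lambda>t. if t \<in> {0..r} then t powr p else 0) = (\<lambda>t. indicator {0<..r} t * t powr p)"
    by (auto simp: indicator_def fun_eq_iff)
  ultimately have hi: "((\<lambda>t. indicator {0<..r} t * t powr p) has_integral (r powr (p+1) / (p+1))) UNIV" by simp
  have "(\<integral>\<^sup>+t. indicator {0<..r} t * ennreal (t powr p) \<partial>lborel) = (\<integral>\<^sup>+t. ennreal (indicator {0<..r} t * t powr p) \<partial>lborel)"
    by (intro nn_integral_cong) (auto simp: indicator_def)
  also have "\<dots> = ennreal (r powr (p+1) / (p+1))"
    by (rule nn_integral_has_integral_lborel[OF _ _ hi]) (auto simp: indicator_def)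
  finally show ?thesis .
qed

lemma nn_integral_powr_to_infinity:
  fixes p r :: real assumes p: "p < -1" and r: "r > 0"
  shows "(\<integral>\<^sup>+t. indicator {r..} t * ennreal (t powr p) \<partial>lborel) = ennreal (- (r powr (p+1)) / (p+1))"
proof -
  have "((\<lambda>t. t powr p) has_integral (- (r powr (p+1)) / (p+1))) {r..}"
    using has_integral_powr_to_inf[OF p r] by simp
  then have "((\<lambda>t. if t \<in> {r..} then t powr p else 0) has_integral (- (r powr (p+1)) / (p+1))) UNIV"
    by (simp only: has_integral_restrict_UNIV)
  moreover have "(\<lambda>t. if t \<in> {r..} then t powr p else 0) = (\<lambda>t. indicator {r..} t * t powr p)"
    by (auto simp: indicator_def fun_eq_iff)
  ultimately have hi: "((\<lambda>t. indicator {r..} t * t powr p) has_integral (- (r powr (p+1)) / (p+1))) UNIV" by simp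
  have "(\<integral>\<^sup>+t. indicator {r..} t * ennreal (t powr p) \<partial>lborel) = (\<integral>\<^sup>+t. ennreal (indicator {r..} t * t powr p) \<partial>lborel)"
    by (intro nn_integral_cong) (auto simp: indicator_def)
  also have "\<dots> = ennreal (- (r powr (p+1)) / (p+1))"
    by (rule nn_integral_has_integral_lborel[OF _ _ hi]) (auto simp: indicator_def)
  finally show ?thesis .
qed

lemma nn_integral_abs:
  fixes f :: "real \<Rightarrow> ennreal" assumes f[measurable]: "f \<in> borel_measurable borel"
  shows "(\<integral>\<^sup>+t. f \<bar>t\<bar> \<partial>lborel) = 2 * (\<integral>\<^sup>+t. indicator {0<..} t * f t \<partial>lborel)"
proof -
  have pw: "f \<bar>t\<bar> = indicator {0<..} t * f t + indicator {..<0} t * f (- t) + indicator {0::real} t * f 0" for t :: real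
    by (auto simp: indicator_def)
  have neg: "(\<integral>\<^sup>+t. indicator {..<0} t * f (- t) \<partial>lborel) = (\<integral>\<^sup>+t. indicator {0<..} t * f t \<partial>lborel)"
    using nn_integral_real_affine[of "\<lambda>t. indicator {..<0} t * f (- t)" "-1" 0]
    by (simp add: indicator_def)
  have z: "(\<integral>\<^sup>+t. indicator {0::real} t * f 0 \<partial>lborel) = 0"
    by (subst nn_integral_multc) auto
  have "(\<integral>\<^sup>+t. f \<bar>t\<bar> \<partial>lborel) = (\<integral>\<^sup>+t. indicator {0<..} t * f t + indicator {..<0} t * f (- t) + indicator {0::real} t * f 0 \<partial>lborel)"
    by (simp only: pw)
  also have "\<dots> = (\<integral>\<^sup>+t. indicator {0<..} t * f t \<partial>lborel) + (\<integral>\<^sup>+t. indicator {..<0} t * f (- t) \<partial>lborel) + (\<integral>\<^sup>+t. indicator {0::real} t * f 0 \<partial>lborel)"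
  proof -
    have m1: "(\<lambda>t. indicator {0<..} t * f t) \<in> borel_measurable lborel" by measurable
    have m2: "(\<lambda>t. indicator {..<0} t * f (- t)) \<in> borel_measurable lborel" by measurable
    have m3: "(\<lambda>t. indicator {0::real} t * f 0) \<in> borel_measurable lborel" by measurable
    show ?thesis by (simp only: nn_integral_add[OF borel_measurable_add[OF m1 m2] m3] nn_integral_add[OF m1 m2])
  qed
  also have "\<dots> = 2 * (\<integral>\<^sup>+t. indicator {0<..} t * f t \<partial>lborel)"
    by (simp add: neg z mult_2)
  finally show ?thesis .
qed

lemma nn_integral_stable_kernel1_tail:
  fixes r \<beta> :: real assumes r: "r > 0" and b: "\<beta> > 0"
  shows "(\<integral>\<^sup>+x. indicator {x. r \<le> \<bar>x\<bar>} x * stable_kernel1 \<beta> x \<partial>lborel) = ennreal (2 * (r powr (-\<beta>) / \<beta>))"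
proof -
  define f where "f s = indicator {r..} s * ennreal (1 / s powr (1+\<beta>))" for s :: real
  have fm[measurable]: "f \<in> borel_measurable borel" unfolding f_def by measurable
  have "(\<integral>\<^sup>+x. indicator {x. r \<le> \<bar>x\<bar>} x * stable_kernel1 \<beta> x \<partial>lborel) = (\<integral>\<^sup>+x. f \<bar>x\<bar> \<partial>lborel)"
    by (intro nn_integral_cong) (simp add: f_def stable_kernel1_def indicator_def)
  also have "\<dots> = 2 * (\<integral>\<^sup>+t. indicator {0<..} t * f t \<partial>lborel)" by (rule nn_integral_abs[OF fm])
  also have "(\<integral>\<^sup>+t. indicator {0<..} t * f t \<partial>lborel) = (\<integral>\<^sup>+t. indicator {r..} t * ennreal (t powr (-1-\<beta>)) \<partial>lborel)"
    using r by (intro nn_integral_cong) (auto simp: f_def indicator_def powr_minus_divide[symmetric])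
  also have "\<dots> = ennreal (- (r powr (-1-\<beta>+1)) / (-1-\<beta>+1))"
    using b r by (intro nn_integral_powr_to_infinity) auto
  also have "2 * ennreal (- (r powr (-1-\<beta>+1)) / (-1-\<beta>+1)) = ennreal (2 * (r powr (-\<beta>) / \<beta>))"
    using b r by (subst numeral_mult_ennreal[symmetric]) auto
  finally show ?thesis .
qed

lemma nn_integral_sq_stable_kernel1_core:
  fixes r \<beta> :: real assumes r: "r > 0" and b: "\<beta> < 2"
  shows "(\<integral>\<^sup>+x. indicator {x. \<bar>x\<bar> \<le> r} x * ennreal (x^2) * stable_kernel1 \<beta> x \<partial>lborel) = ennreal (2 * (r powr (2-\<beta>) / (2-\<beta>)))"
proof -
  define f where "f s = indicator {..r} s * ennreal (s^2 / s powr (1+\<beta>))" for s :: real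
  have fm[measurable]: "f \<in> borel_measurable borel" unfolding f_def by measurable
  have "(\<integral>\<^sup>+x. indicator {x. \<bar>x\<bar> \<le> r} x * ennreal (x^2) * stable_kernel1 \<beta> x \<partial>lborel) = (\<integral>\<^sup>+x. f \<bar>x\<bar> \<partial>lborel)"
    by (intro nn_integral_cong) (simp add: f_def stable_kernel1_def indicator_def ennreal_mult'[symmetric])
  also have "\<dots> = 2 * (\<integral>\<^sup>+t. indicator {0<..} t * f t \<partial>lborel)" by (rule nn_integral_abs[OF fm])
  also have "(\<integral>\<^sup>+t. indicator {0<..} t * f t \<partial>lborel) = (\<integral>\<^sup>+t. indicator {0<..r} t * ennreal (t powr (1-\<beta>)) \<partial>lborel)"
  proof (intro nn_integral_cong)
    fix t :: real
    show "indicator {0<..} t * f t = indicator {0<..r} t * ennreal (t powr (1-\<beta>))"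
    proof (cases "0 < t")
      case True
      have "t powr (1-\<beta>) = t powr (2 - (1+\<beta>))" by (simp add: algebra_simps)
      also have "\<dots> = t powr 2 / t powr (1+\<beta>)" by (rule powr_diff)
      also have "t powr 2 = t^2" using True by simp
      finally have "t^2 / t powr (1+\<beta>) = t powr (1-\<beta>)" by simp
      then show ?thesis using True by (simp add: f_def indicator_def)
    qed (simp add: indicator_def)
  qed
  also have "\<dots> = ennreal (r powr (1-\<beta>+1) / (1-\<beta>+1))"
    using b r by (intro nn_integral_powr_0_to) auto
  also have "2 * ennreal (r powr (1-\<beta>+1) / (1-\<beta>+1)) = ennreal (2 * (r powr (2-\<beta>) / (2-\<beta>)))"
    using b r by (subst numeral_mult_ennreal[symmetric]) auto
  finally show ?thesis .
qed

lemma nn_integral_le_powr_envelope: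
  fixes f :: "real \<Rightarrow> ennreal" and c p q :: real
  assumes fm[measurable]: "f \<in> borel_measurable borel" and c: "c \<ge> 0" and p: "p > -1" and q: "q < -1"
    and f0: "\<And>t. t \<noteq> 0 \<Longrightarrow> \<bar>t\<bar> \<le> 1 \<Longrightarrow> f t \<le> ennreal (c * \<bar>t\<bar> powr p)"
    and f1: "\<And>t. 1 \<le> \<bar>t\<bar> \<Longrightarrow> f t \<le> ennreal (c * \<bar>t\<bar> powr q)"
  shows "(\<integral>\<^sup>+t. f t \<partial>lborel) \<le> ennreal (2 * c * (1 / (p+1) + 1 / (-q-1)))"
proof -
  define g where "g s = ennreal c * (indicator {0<..1} s * ennreal (s powr p) + indicator {1..} s * ennreal (s powr q))" for s :: real
  have gm[measurable]: "g \<in> borel_measurable borel" unfolding g_def by measurable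
  have "(\<integral>\<^sup>+t. f t \<partial>lborel) \<le> (\<integral>\<^sup>+t. g \<bar>t\<bar> \<partial>lborel)"
  proof (intro nn_integral_mono_AE eventually_mono[OF AE_lborel_singleton[of 0]])
    fix t :: real assume t: "t \<noteq> 0"
    show "f t \<le> g \<bar>t\<bar>"
    proof (cases "\<bar>t\<bar> \<le> 1")
      case True
      then have "f t \<le> ennreal (c * \<bar>t\<bar> powr p)" using f0 t by simp
      also have "\<dots> = ennreal c * (indicator {0<..1} \<bar>t\<bar> * ennreal (\<bar>t\<bar> powr p))"
        using True t c by (simp add: ennreal_mult indicator_def)
      also have "\<dots> \<le> g \<bar>t\<bar>" unfolding g_def by (intro mult_left_mono add_increasing2) auto
      finally show ?thesis .
    next
      case False
      then have "f t \<le> ennreal (c * \<bar>t\<bar> powr q)" using f1 by simp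
      also have "\<dots> = ennreal c * (indicator {1..} \<bar>t\<bar> * ennreal (\<bar>t\<bar> powr q))"
        using False t c by (simp add: ennreal_mult indicator_def)
      also have "\<dots> \<le> g \<bar>t\<bar>" unfolding g_def by (intro mult_left_mono add_increasing) auto
      finally show ?thesis .
    qed
  qed
  also have "\<dots> = 2 * (\<integral>\<^sup>+t. indicator {0<..} t * g t \<partial>lborel)" by (rule nn_integral_abs[OF gm])
  finally have st1: "(\<integral>\<^sup>+t. f t \<partial>lborel) \<le> 2 * (\<integral>\<^sup>+t. indicator {0<..} t * g t \<partial>lborel)" .
  have "(\<integral>\<^sup>+t. indicator {0<..} t * g t \<partial>lborel) = (\<integral>\<^sup>+t. ennreal c * (indicator {0<..1} t * ennreal (t powr p) + indicator {1..} t * ennreal (t powr q)) \<partial>lborel)"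
    by (intro nn_integral_cong) (simp add: g_def indicator_def)
  also have "\<dots> = ennreal c * (\<integral>\<^sup>+t. indicator {0<..1} t * ennreal (t powr p) + indicator {1..} t * ennreal (t powr q) \<partial>lborel)"
    by (rule nn_integral_cmult) measurable
  also have "(\<integral>\<^sup>+t. indicator {0<..1} t * ennreal (t powr p) + indicator {1..} t * ennreal (t powr q) \<partial>lborel)
     = (\<integral>\<^sup>+t. indicator {0<..1} t * ennreal (t powr p) \<partial>lborel) + (\<integral>\<^sup>+t. indicator {1..} t * ennreal (t powr q) \<partial>lborel)"
    by (rule nn_integral_add) measurable
  finally have st2: "(\<integral>\<^sup>+t. indicator {0<..} t * g t \<partial>lborel) = ennreal c * ((\<integral>\<^sup>+t. indicator {0<..1} t * ennreal (t powr p) \<partial>lborel) + (\<integral>\<^sup>+t. indicator {1..} t * ennreal (t powr q) \<partial>lborel))" .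
  have st3: "(\<integral>\<^sup>+t. indicator {0<..1} t * ennreal (t powr p) \<partial>lborel) = ennreal (1 / (p+1))"
    using nn_integral_powr_0_to[OF p, of 1] by simp
  have st4: "(\<integral>\<^sup>+t. indicator {1..} t * ennreal (t powr q) \<partial>lborel) = ennreal (1 / (-q-1))"
    using nn_integral_powr_to_infinity[OF q, of 1] by (simp add: minus_divide_right)
  have st5: "2 * (ennreal c * (ennreal (1 / (p+1)) + ennreal (1 / (-q-1)))) = ennreal (2 * c * (1 / (p+1) + 1 / (-q-1)))"
    using p q c by (subst mult.assoc, subst numeral_mult_ennreal[symmetric]) (auto simp: ennreal_mult ennreal_plus[symmetric] simp del: ennreal_plus)
  show ?thesis using st1 unfolding st2 st3 st4 st5 .
qed

lemma min_powr_eq_left: "0 \<le> r \<Longrightarrow> r \<le> 1 \<Longrightarrow> a \<le> b \<Longrightarrow> min (r powr b) (r powr a) = r powr (b::real)"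
  by (simp add: min_def powr_mono')

lemma min_powr_eq_right: "1 \<le> r \<Longrightarrow> a \<le> b \<Longrightarrow> min (r powr b) (r powr a) = r powr (a::real)"
  using powr_mono[of a b r] by (simp add: min.absorb2)

lemma min_powr_le_of_comparable:
  fixes r s P Q :: real
  assumes r: "0 < r" and s: "r/2 \<le> s" "s \<le> 3*r/2" and P: "0 < P" and Q: "-1 < Q" "Q < 1"
  shows "min (s powr P) (s powr Q) \<le> max (2 powr P) 2 * min (r powr P) (r powr Q)"
proof -
  have sp: "s > 0" using r s by simp
  have "s powr P \<le> (2*r) powr P" using s r P by (intro powr_mono2) auto
  also have "\<dots> = 2 powr P * r powr P" by (simp add: powr_mult)
  also have "\<dots> \<le> max (2 powr P) 2 * r powr P" by (intro mult_right_mono) auto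
  finally have 1: "s powr P \<le> max (2 powr P) 2 * r powr P" .
  have 2: "s powr Q \<le> max (2 powr P) 2 * r powr Q"
  proof (cases "Q \<ge> 0")
    case True
    have "s powr Q \<le> (3/2 * r) powr Q" using s r True by (intro powr_mono2) auto
    also have "\<dots> = (3/2) powr Q * r powr Q" using powr_mult[of "3/2" r Q] r by simp
    also have "(3/2::real) powr Q \<le> (3/2) powr 1" using Q by (intro powr_mono) auto
    then have "(3/2::real) powr Q * r powr Q \<le> max (2 powr P) 2 * r powr Q"
      by (intro mult_right_mono) auto
    finally show ?thesis .
  next
    case False
    have "s powr Q \<le> (r/2) powr Q" using s r False by (intro powr_mono2') auto
    also have "\<dots> = 2 powr (-Q) * r powr Q" by (simp add: powr_divide powr_minus_divide)
    also have "(2::real) powr (-Q) \<le> 2 powr 1" using Q by (intro powr_mono) auto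
    then have "(2::real) powr (-Q) * r powr Q \<le> max (2 powr P) 2 * r powr Q"
      by (intro mult_right_mono) auto
    finally show ?thesis .
  qed
  have "min (s powr P) (s powr Q) \<le> min (max (2 powr P) 2 * r powr P) (max (2 powr P) 2 * r powr Q)"
    using 1 2 by linarith
  also have "\<dots> = max (2 powr P) 2 * min (r powr P) (r powr Q)"
    by (simp add: min_mult_distrib_left)
  finally show ?thesis .
qed

lemma min_powr_le_of_le_double:
  fixes r s P G :: real
  assumes s: "0 \<le> s" "s \<le> 2*r" and G: "0 < G" "G \<le> P"
  shows "min (s powr P) (s powr G) \<le> 2 powr P * min (r powr P) (r powr G)"
proof -
  have r: "0 \<le> r" using s by simp
  have 1: "s powr P \<le> 2 powr P * r powr P"
    using powr_mono2[of P s "2*r"] s G by (simp add: powr_mult)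
  have "s powr G \<le> 2 powr G * r powr G"
    using powr_mono2[of G s "2*r"] s G by (simp add: powr_mult)
  also have "\<dots> \<le> 2 powr P * r powr G" using G by (intro mult_right_mono powr_mono) auto
  finally have 2: "s powr G \<le> 2 powr P * r powr G" .
  have "min (s powr P) (s powr G) \<le> min (2 powr P * r powr P) (2 powr P * r powr G)"
    using 1 2 by linarith
  also have "\<dots> = 2 powr P * min (r powr P) (r powr G)"
    by (simp add: min_mult_distrib_left)
  finally show ?thesis .
qed

lemma nn_integral_pair_swap:
  fixes \<Psi> :: "real \<times> real \<Rightarrow> ennreal" and v :: "real \<Rightarrow> ennreal"
  assumes [measurable]: "\<Psi> \<in> borel_measurable (borel \<Otimes>\<^sub>M borel)" "v \<in> borel_measurable borel"
  shows "(\<integral>\<^sup>+q. \<Psi> (snd q, fst q) * v (fst q) * v (snd q) \<partial>(lborel \<Otimes>\<^sub>M lborel))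
       = (\<integral>\<^sup>+q. \<Psi> q * v (fst q) * v (snd q) \<partial>(lborel \<Otimes>\<^sub>M lborel))"
proof -
  have Pl[measurable]: "\<Psi> \<in> borel_measurable (lborel \<Otimes>\<^sub>M lborel)"
    using assms(1) by (simp add: measurable_def space_pair_measure sets_pair_measure)
  have m1: "(\<lambda>q. \<Psi> (snd q, fst q) * v (fst q) * v (snd q)) \<in> borel_measurable (lborel \<Otimes>\<^sub>M (lborel::real measure))"
    by measurable
  have m2: "(\<lambda>q. \<Psi> q * v (fst q) * v (snd q)) \<in> borel_measurable (lborel \<Otimes>\<^sub>M (lborel::real measure))"
    by measurable
  have "(\<integral>\<^sup>+q. \<Psi> (snd q, fst q) * v (fst q) * v (snd q) \<partial>(lborel \<Otimes>\<^sub>M lborel))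
      = (\<integral>\<^sup>+x. \<integral>\<^sup>+y. \<Psi> (y, x) * v x * v y \<partial>lborel \<partial>lborel)"
    using lborel.nn_integral_fst[OF m1] by simp
  also have "\<dots> = (\<integral>\<^sup>+y. \<integral>\<^sup>+x. \<Psi> (y, x) * v x * v y \<partial>lborel \<partial>lborel)"
    by (rule lborel_pair.Fubini'[symmetric]) measurable
  also have "\<dots> = (\<integral>\<^sup>+q. \<Psi> q * v (fst q) * v (snd q) \<partial>(lborel \<Otimes>\<^sub>M lborel))"
    using lborel.nn_integral_fst[OF m2] by (simp add: mult_ac)
  finally show ?thesis .
qed

lemma mult_sq_powr_le:
  fixes r m e t s K :: real
  assumes r: "r > 0" and m: "0 \<le> m" "m \<le> r powr e" and K: "0 \<le> K"
  shows "K * m^2 * (1 / r powr t) * r powr s \<le> K * r powr (2*e - t + s)"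
proof -
  have "m^2 \<le> (r powr e)^2" using m by (intro power_mono) auto
  also have "(r powr e)^2 = r powr (2*e)" by (simp add: power2_eq_square powr_add[symmetric])
  finally have m2: "m^2 \<le> r powr (2*e)" .
  have "K * m^2 * (1 / r powr t) * r powr s = K * (m^2 * (r powr (-t) * r powr s))"
    by (simp add: powr_minus_divide[symmetric])
  also have "\<dots> \<le> K * (r powr (2*e) * (r powr (-t) * r powr s))"
    using m2 K by (intro mult_left_mono mult_right_mono) auto
  also have "r powr (2*e) * (r powr (-t) * r powr s) = r powr (2*e - t + s)"
    by (simp add: powr_add[symmetric] algebra_simps)
  finally show ?thesis .
qed

lemma nn_integral_sq_envelope_le:
  fixes h :: "real \<Rightarrow> real" and K e1 e2 t s pp qq :: real
  assumes hm[measurable]: "h \<in> borel_measurable borel" and hn: "\<And>r. 0 \<le> h r"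
    and h1: "\<And>r. 0 < r \<Longrightarrow> h r \<le> r powr e1" and h2: "\<And>r. 0 < r \<Longrightarrow> h r \<le> r powr e2"
    and K: "0 \<le> K" and pp: "pp = 2*e1 - t + s" "pp > -1" and qq: "qq = 2*e2 - t + s" "qq < -1"
  shows "(\<integral>\<^sup>+x. ennreal (K * (h \<bar>x\<bar>)^2 * (1 / \<bar>x\<bar> powr t) * \<bar>x\<bar> powr s) \<partial>lborel)
     \<le> ennreal (2 * K * (1 / (pp + 1) + 1 / (- qq - 1)))"
proof (rule nn_integral_le_powr_envelope)
  show "(\<lambda>x. ennreal (K * (h \<bar>x\<bar>)^2 * (1 / \<bar>x\<bar> powr t) * \<bar>x\<bar> powr s)) \<in> borel_measurable borel"
    by measurable
  fix x :: real
  show "x \<noteq> 0 \<Longrightarrow> \<bar>x\<bar> \<le> 1 \<Longrightarrow> ennreal (K * (h \<bar>x\<bar>)^2 * (1 / \<bar>x\<bar> powr t) * \<bar>x\<bar> powr s) \<le> ennreal (K * \<bar>x\<bar> powr pp)"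
    using mult_sq_powr_le[of "\<bar>x\<bar>" "h \<bar>x\<bar>" e1 K t s] hn h1 K pp by (intro ennreal_leI) auto
  show "1 \<le> \<bar>x\<bar> \<Longrightarrow> ennreal (K * (h \<bar>x\<bar>)^2 * (1 / \<bar>x\<bar> powr t) * \<bar>x\<bar> powr s) \<le> ennreal (K * \<bar>x\<bar> powr qq)"
    using mult_sq_powr_le[of "\<bar>x\<bar>" "h \<bar>x\<bar>" e2 K t s] hn h2 K qq by (intro ennreal_leI) auto
qed (use K pp qq in auto)

lemma mult_powr_le:
  fixes r m e t K :: real
  assumes r: "r > 0" and m: "0 \<le> m" "m \<le> r powr e" and K: "0 \<le> K"
  shows "K * m * (1 / r powr t) \<le> K * r powr (e - t)"
proof -
  have "K * m * (1 / r powr t) \<le> K * r powr e * (1 / r powr t)"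
    using m K r by (intro mult_right_mono mult_left_mono) auto
  also have "\<dots> = K * r powr (e - t)" by (simp add: powr_diff)
  finally show ?thesis .
qed

text \<open>On the segment \<open>x + y = 1\<close>, \<open>x\<^sup>g + y\<^sup>g\<close> is above \<open>1\<close> for \<open>g < 1\<close> and below it for \<open>g > 1\<close>.\<close>

lemma powr_add_ne:
  fixes a b g :: real
  assumes a: "0 < a" and b: "0 < b" and g: "g \<noteq> 1"
  shows "(a + b) powr g \<noteq> a powr g + b powr g"
proof -
  define s where "s = a + b"
  define x where "x = a / s"
  define y where "y = b / s"
  have s: "0 < s" using a b unfolding s_def by simp
  have xy: "0 < x" "x < 1" "0 < y" "y < 1" "x + y = 1"
    using a b s unfolding x_def y_def by (auto simp: s_def divide_less_eq add_divide_distrib[symmetric])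
  have split: "a powr g + b powr g = s powr g * (x powr g + y powr g)"
    using s a b unfolding x_def y_def by (simp add: powr_divide distrib_left)
  have "x powr g + y powr g \<noteq> 1"
  proof (cases "g < 1")
    case True
    have "x powr 1 < x powr g" "y powr 1 < y powr g"
      using xy True by (intro powr_less_mono'; simp)+
    then show ?thesis using xy by simp
  next
    case False
    then have "1 < g" using g by simp
    then have "x powr g < x powr 1" "y powr g < y powr 1"
      using xy by (intro powr_less_mono'; simp)+
    then show ?thesis using xy by simp
  qed
  then show ?thesis using s unfolding split s_def[symmetric] by simp
qed

lemma c_const_pos: assumes "0 < \<beta>" "\<beta> < 2" shows "0 < c_const \<beta> d"
proof -
  have "Gamma ((real d + \<beta>) / 2) > 0" using assms by (intro Gamma_real_pos) simp
  moreover have "- \<beta> / 2 \<notin> \<int>\<^sub>\<le>\<^sub>0"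
  proof
    assume "- \<beta> / 2 \<in> \<int>\<^sub>\<le>\<^sub>0"
    then obtain n :: int where n: "- \<beta> / 2 = of_int n" by (elim nonpos_Ints_cases)
    then have "-1 < n" "n < 0" using assms by linarith+
    then show False by simp
  qed
  ultimately show ?thesis unfolding c_const_def by (simp add: Gamma_eq_zero_iff)
qed

text \<open>Twice the sum of the constants of the three pieces of the majorant of the second difference;
  the factor \<open>2\<close> comes from symmetrising in the two variables.\<close>

definition gamma2_const :: "real \<Rightarrow> real \<Rightarrow> real \<Rightarrow> real" where
  "gamma2_const \<beta> \<delta> \<Lambda> = 2 * (4 * (max \<Lambda> 2)^2 / \<beta>
     + 4 * (max \<Lambda> 2 * max (2 powr (\<beta> + \<delta> - 1)) 2)^2 / (2 - \<beta>)
     + 4 * (max \<Lambda> 2 * 2 powr (\<beta> + \<delta>))^2 * 2 powr \<beta> / \<beta>)"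

lemma gamma2_const_pos: "0 < \<beta> \<Longrightarrow> \<beta> < 2 \<Longrightarrow> 0 < gamma2_const \<beta> \<delta> \<Lambda>"
  unfolding gamma2_const_def by (intro mult_pos_pos add_pos_pos divide_pos_pos zero_less_power) auto

lemma small_ratio_of_rates:
  fixes F G :: "real \<Rightarrow> real"
  assumes "0 < \<epsilon>0" "0 < C2"
    and rates: "\<And>\<epsilon>. 0 < \<epsilon> \<Longrightarrow> \<epsilon> < \<epsilon>0 \<Longrightarrow> C2 / \<epsilon> \<le> F \<epsilon> \<and> 0 < G \<epsilon> \<and> G \<epsilon> \<le> C3 / \<epsilon>"
    and "0 < \<mu>"
  shows "\<exists>\<epsilon>. 0 < G \<epsilon> \<and> G \<epsilon> < \<mu> * (F \<epsilon>)\<^sup>2"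
proof -
  have "0 < G (\<epsilon>0 / 2)" "G (\<epsilon>0 / 2) \<le> C3 / (\<epsilon>0 / 2)" using rates[of "\<epsilon>0 / 2"] assms by auto
  then have "0 < C3 / (\<epsilon>0 / 2)" by linarith
  then have C3: "0 < C3" using assms by (simp add: zero_less_divide_iff)
  define \<epsilon> where "\<epsilon> = min (\<epsilon>0 / 2) (\<mu> * C2^2 / (2 * C3))"
  have \<epsilon>: "0 < \<epsilon>" "\<epsilon> < \<epsilon>0" "\<epsilon> \<le> \<mu> * C2^2 / (2 * C3)"
    unfolding \<epsilon>_def using assms C3 by auto
  have "C3 * \<epsilon> \<le> \<mu> * C2^2 / 2" using \<epsilon>(3) C3 by (simp add: field_simps)
  also have "\<dots> < \<mu> * C2^2" using assms by simp
  finally have "C3 / \<epsilon> < \<mu> * (C2 / \<epsilon>)^2"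
    using \<epsilon> by (simp add: field_simps power2_eq_square)
  also have "\<dots> \<le> \<mu> * (F \<epsilon>)^2"
    using rates[OF \<epsilon>(1,2)] assms \<epsilon> by (intro mult_left_mono power_mono) auto
  finally show ?thesis using rates[OF \<epsilon>(1,2)] by (intro exI[of _ \<epsilon>]) auto
qed

locale power_profile =
  fixes \<beta> \<delta> \<Lambda> \<epsilon> :: real and u :: "real \<Rightarrow> real"
  assumes beta_pos: "0 < \<beta>" and beta_less_2: "\<beta> < 2"
    and delta_pos: "0 < \<delta>" and beta_delta: "1 < \<beta> + \<delta>"
    and eps_pos: "0 < \<epsilon>" and eps_less: "\<epsilon> < \<beta>" and exponent_ne_1: "\<beta> - \<epsilon> \<noteq> 1"
    and C1: "u C1_differentiable_on UNIV"
    and even: "\<And>x. u (- x) = u x"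
    and outside: "\<And>x. 1 \<le> \<bar>x\<bar> \<Longrightarrow> u x = \<bar>x\<bar> powr (\<beta> - \<epsilon>)"
    and inside: "\<And>x. \<bar>x\<bar> < 1 \<Longrightarrow> 0 \<le> u x \<and> u x \<le> \<Lambda> * \<bar>x\<bar> powr (\<beta> + \<delta>)"
    and inside_deriv: "\<And>x. \<bar>x\<bar> < 1 \<Longrightarrow> \<bar>deriv u x\<bar> \<le> \<Lambda> * \<bar>x\<bar> powr (\<beta> + \<delta> - 1)"
begin

text \<open>The \<open>2\<close> in \<open>A\<close> dominates the coefficient \<open>\<beta> - \<epsilon>\<close> of \<open>u'\<close> outside \<open>[-1, 1]\<close>.\<close>

definition "A = max \<Lambda> 2"

definition "env r = min (r powr (\<beta> + \<delta>)) (r powr (\<beta> - \<epsilon>))"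
definition "denv r = min (r powr (\<beta> + \<delta> - 1)) (r powr (\<beta> - \<epsilon> - 1))"

lemma A_ge: "2 \<le> A" "\<Lambda> \<le> A" unfolding A_def by auto

lemma exponents: "0 < \<beta> - \<epsilon>" "\<beta> - \<epsilon> < \<beta> + \<delta>" "\<beta> - \<epsilon> < 2" "0 < \<beta> + \<delta> - 1"
  using beta_less_2 delta_pos beta_delta eps_pos eps_less by linarith+

lemma env_nonneg: "0 \<le> env r" and denv_nonneg: "0 \<le> denv r"
  unfolding env_def denv_def by simp_all

lemma env_le: "env r \<le> r powr (\<beta> + \<delta>)" "env r \<le> r powr (\<beta> - \<epsilon>)"
  and denv_le: "denv r \<le> r powr (\<beta> + \<delta> - 1)" "denv r \<le> r powr (\<beta> - \<epsilon> - 1)"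
  unfolding env_def denv_def by auto

lemma env_0 [simp]: "env 0 = 0" and denv_0 [simp]: "denv 0 = 0"
  unfolding env_def denv_def by simp_all

lemma env_measurable [measurable]: "env \<in> borel_measurable borel"
  and denv_measurable [measurable]: "denv \<in> borel_measurable borel"
  unfolding env_def denv_def by measurable

lemma u_0 [simp]: "u 0 = 0"
  using inside[of 0] beta_delta by simp

lemma u_nonneg: "0 \<le> u x"
  using inside[of x] outside[of x] by (cases "\<bar>x\<bar> < 1") auto

lemma u_le_env: "u x \<le> A * env \<bar>x\<bar>"
proof (cases "\<bar>x\<bar> < 1")
  case True
  then have "env \<bar>x\<bar> = \<bar>x\<bar> powr (\<beta> + \<delta>)"
    unfolding env_def using exponents by (intro min_powr_eq_left) auto
  moreover have "u x \<le> \<Lambda> * \<bar>x\<bar> powr (\<beta> + \<delta>)" using inside True by auto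
  moreover have "\<Lambda> * \<bar>x\<bar> powr (\<beta> + \<delta>) \<le> A * \<bar>x\<bar> powr (\<beta> + \<delta>)"
    using A_ge by (intro mult_right_mono) auto
  ultimately show ?thesis by simp
next
  case False
  then have "env \<bar>x\<bar> = \<bar>x\<bar> powr (\<beta> - \<epsilon>)"
    unfolding env_def using exponents by (intro min_powr_eq_right) auto
  moreover have "u x = 1 * \<bar>x\<bar> powr (\<beta> - \<epsilon>)" using outside False by auto
  ultimately show ?thesis using A_ge by (metis mult_right_mono one_le_numeral order_trans powr_ge_zero)
qed

lemma u_continuous: "continuous_on UNIV u"
  and deriv_continuous: "continuous_on UNIV (deriv u)"
  and has_deriv: "(u has_real_derivative deriv u x) (at x)"
proof -
  obtain D where D: "\<And>x. (u has_real_derivative D x) (at x)" "continuous_on UNIV D"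
    using C1 unfolding C1_differentiable_on_def by (auto simp: has_real_derivative_iff_has_vector_derivative)
  then have "deriv u = D" using DERIV_imp_deriv by (auto simp: fun_eq_iff)
  with D show "continuous_on UNIV (deriv u)" "(u has_real_derivative deriv u x) (at x)" by auto
  show "continuous_on UNIV u"
    using D(1) DERIV_isCont continuous_at_imp_continuous_on by blast
qed

lemma u_measurable [measurable]: "u \<in> borel_measurable borel"
  using u_continuous by (rule borel_measurable_continuous_onI)

lemma deriv_minus: "deriv u (- x) = - deriv u x"
proof -
  have "DERIV (\<lambda>y. u (- y)) x :> - deriv u (- x)" using has_deriv[of "-x"] DERIV_mirror by blast
  then have "DERIV u x :> - deriv u (- x)" using even by simp
  then show ?thesis by (simp add: DERIV_imp_deriv)
qed

lemma deriv_outside: assumes "1 < x" shows "deriv u x = (\<beta> - \<epsilon>) * x powr (\<beta> - \<epsilon> - 1)"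
proof -
  have "((\<lambda>y. y powr (\<beta> - \<epsilon>)) has_real_derivative (\<beta> - \<epsilon>) * x powr (\<beta> - \<epsilon> - 1)) (at x)"
    using assms by (intro has_real_derivative_powr) auto
  then have "(u has_real_derivative (\<beta> - \<epsilon>) * x powr (\<beta> - \<epsilon> - 1)) (at x)"
    by (rule has_field_derivative_transform_within_open[where S="{1<..}"]) (use assms outside in auto)
  then show ?thesis by (rule DERIV_imp_deriv)
qed

lemma deriv_le_denv_outside: assumes "1 < x" shows "\<bar>deriv u x\<bar> \<le> A * denv x"
proof -
  have "denv x = x powr (\<beta> - \<epsilon> - 1)"
    unfolding denv_def using exponents assms by (intro min_powr_eq_right) auto
  moreover have "(\<beta> - \<epsilon>) * x powr (\<beta> - \<epsilon> - 1) \<le> A * x powr (\<beta> - \<epsilon> - 1)"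
    using exponents A_ge by (intro mult_right_mono) auto
  ultimately show ?thesis using assms exponents by (simp add: deriv_outside abs_mult)
qed

text \<open>At \<open>|x| = 1\<close> neither hypothesis on \<open>u\<close> applies directly; the bound is inherited from
  \<open>x > 1\<close> by continuity of \<open>u'\<close>.\<close>

lemma deriv_le_denv: "\<bar>deriv u x\<bar> \<le> A * denv \<bar>x\<bar>"
proof -
  have at_1: "\<bar>deriv u 1\<bar> \<le> A * denv 1"
  proof (rule tendsto_le[of "at_right 1"])
    show "((\<lambda>y. A * denv y) \<longlongrightarrow> A * denv 1) (at_right 1)"
      unfolding denv_def by (intro tendsto_intros) auto
    have "isCont (deriv u) 1" using deriv_continuous continuous_on_eq_continuous_at[of UNIV] by auto
    then show "((\<lambda>y. \<bar>deriv u y\<bar>) \<longlongrightarrow> \<bar>deriv u 1\<bar>) (at_right 1)"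
      by (intro tendsto_intros) (simp add: isCont_def filterlim_at_split)
    show "eventually (\<lambda>y. \<bar>deriv u y\<bar> \<le> A * denv y) (at_right 1)"
      using eventually_at_right_less[of "1::real"] by eventually_elim (rule deriv_le_denv_outside)
  qed simp
  consider "\<bar>x\<bar> < 1" | "1 < \<bar>x\<bar>" | "\<bar>x\<bar> = 1" by linarith
  then show ?thesis
  proof cases
    case 1
    then have "denv \<bar>x\<bar> = \<bar>x\<bar> powr (\<beta> + \<delta> - 1)"
      unfolding denv_def using exponents by (intro min_powr_eq_left) auto
    moreover have "\<Lambda> * \<bar>x\<bar> powr (\<beta> + \<delta> - 1) \<le> A * \<bar>x\<bar> powr (\<beta> + \<delta> - 1)"
      using A_ge by (intro mult_right_mono) auto
    ultimately show ?thesis using inside_deriv[OF 1] by simp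
  next
    case 2
    then show ?thesis
      using deriv_le_denv_outside[of "\<bar>x\<bar>"] deriv_minus[of x] by (cases "0 \<le> x") auto
  next
    case 3
    then show ?thesis using at_1 deriv_minus[of 1] by (cases "0 \<le> x") auto
  qed
qed

definition "Cd = max (2 powr (\<beta> + \<delta> - 1)) 2"

lemma u_increment_le: assumes ab: "\<bar>a\<bar> \<le> \<bar>b\<bar> / 2"
  shows "\<bar>u (a + b) - u b\<bar> \<le> \<bar>a\<bar> * (A * Cd * denv \<bar>b\<bar>)"
proof (cases "a = 0")
  case True then show ?thesis by simp
next
  case False
  have "\<exists>z. \<bar>z - b\<bar> \<le> \<bar>a\<bar> \<and> \<bar>u (a + b) - u b\<bar> = \<bar>a\<bar> * \<bar>deriv u z\<bar>"
  proof (cases "a > 0")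
    case True
    obtain z where z: "b < z" "z < b + a" "u (b + a) - u b = (b + a - b) * deriv u z"
      using MVT2[of b "b + a" u "deriv u"] True has_deriv by auto
    then show ?thesis using True by (intro exI[of _ z]) (auto simp: abs_mult add.commute)
  next
    case False
    then have an: "a < 0" using \<open>a \<noteq> 0\<close> by simp
    obtain z where z: "b + a < z" "z < b" "u b - u (b + a) = (b - (b + a)) * deriv u z"
      using MVT2[of "b + a" b u "deriv u"] an has_deriv by auto
    have "\<bar>u (a + b) - u b\<bar> = \<bar>u b - u (b + a)\<bar>" by (simp add: add.commute abs_minus_commute)
    then show ?thesis using an z by (intro exI[of _ z]) (auto simp: abs_mult)
  qed
  then obtain z where z: "\<bar>z - b\<bar> \<le> \<bar>a\<bar>" "\<bar>u (a + b) - u b\<bar> = \<bar>a\<bar> * \<bar>deriv u z\<bar>" by blast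
  have bpos: "\<bar>b\<bar> > 0" using ab False by simp
  have zb: "\<bar>b\<bar> / 2 \<le> \<bar>z\<bar>" "\<bar>z\<bar> \<le> 3 * \<bar>b\<bar> / 2" using z(1) ab by linarith+
  have "\<bar>deriv u z\<bar> \<le> A * denv \<bar>z\<bar>" by (rule deriv_le_denv)
  also have "\<dots> \<le> A * (Cd * denv \<bar>b\<bar>)"
    unfolding denv_def Cd_def using exponents A_ge bpos zb by (intro mult_left_mono min_powr_le_of_comparable) auto
  finally have "\<bar>deriv u z\<bar> \<le> A * Cd * denv \<bar>b\<bar>" by (simp add: mult.assoc)
  then show ?thesis using z(2) by (simp add: mult_left_mono)
qed

lemma u_increment_le_diagonal:
  assumes "\<bar>a\<bar> \<le> \<bar>b\<bar>" "\<bar>b\<bar> \<le> 2 * \<bar>a\<bar>"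
  shows "\<bar>u (a + b) - u b\<bar> \<le> A * 2 powr (\<beta> + \<delta>) * env \<bar>b\<bar>"
proof -
  have "u (a + b) \<le> A * env \<bar>a + b\<bar>" by (rule u_le_env)
  also have "\<dots> \<le> A * (2 powr (\<beta> + \<delta>) * env \<bar>b\<bar>)"
    unfolding env_def using A_ge exponents assms by (intro mult_left_mono min_powr_le_of_le_double) auto
  finally have "u (a + b) \<le> A * 2 powr (\<beta> + \<delta>) * env \<bar>b\<bar>" by (simp add: mult.assoc)
  moreover have "u b \<le> A * 2 powr (\<beta> + \<delta>) * env \<bar>b\<bar>"
  proof -
    have "(1::real) \<le> 2 powr (\<beta> + \<delta>)" using exponents by (intro ge_one_powr_ge_zero) auto
    then have "A * 1 * env \<bar>b\<bar> \<le> A * 2 powr (\<beta> + \<delta>) * env \<bar>b\<bar>"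
      using A_ge env_nonneg by (intro mult_right_mono mult_left_mono) auto
    then show ?thesis using u_le_env[of b] by simp
  qed
  ultimately show ?thesis using u_nonneg[of "a + b"] u_nonneg[of b] by linarith
qed

lemma second_difference_sq_le: assumes ab: "\<bar>a\<bar> \<le> \<bar>b\<bar>"
  shows "(u (a + b) - u a - u b)^2 \<le> 2 * (A * env \<bar>a\<bar>)^2 + 2 * (a^2 * (A * Cd * denv \<bar>b\<bar>)^2)
           + 2 * (if \<bar>b\<bar> \<le> 2 * \<bar>a\<bar> then (A * 2 powr (\<beta> + \<delta>) * env \<bar>b\<bar>)^2 else 0)"
proof -
  define x where "x = u (a + b) - u b"
  have "(u (a + b) - u a - u b)^2 \<le> 2 * x^2 + 2 * (u a)^2"
    using zero_le_power2[of "x + u a"] unfolding x_def by (simp add: power2_eq_square algebra_simps)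
  moreover have "(u a)^2 \<le> (A * env \<bar>a\<bar>)^2"
    using u_le_env[of a] u_nonneg[of a] by (intro power_mono) auto
  moreover have "x^2 \<le> a^2 * (A * Cd * denv \<bar>b\<bar>)^2
      + (if \<bar>b\<bar> \<le> 2 * \<bar>a\<bar> then (A * 2 powr (\<beta> + \<delta>) * env \<bar>b\<bar>)^2 else 0)"
  proof (cases "\<bar>a\<bar> \<le> \<bar>b\<bar> / 2")
    case True
    have "\<bar>x\<bar> \<le> \<bar>a\<bar> * (A * Cd * denv \<bar>b\<bar>)" unfolding x_def by (rule u_increment_le[OF True])
    then have "\<bar>x\<bar>^2 \<le> (\<bar>a\<bar> * (A * Cd * denv \<bar>b\<bar>))^2" by (intro power_mono) auto
    then show ?thesis by (simp add: power_mult_distrib add_increasing2)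
  next
    case False
    then have "\<bar>x\<bar>^2 \<le> (A * 2 powr (\<beta> + \<delta>) * env \<bar>b\<bar>)^2"
      unfolding x_def using ab by (intro power_mono u_increment_le_diagonal) auto
    with False show ?thesis by (simp add: add_increasing)
  qed
  ultimately show ?thesis by linarith
qed

lemma pair_integral_env_term: "(\<integral>\<^sup>+q. indicator {q. \<bar>fst q\<bar> \<le> \<bar>snd q\<bar>} q * ennreal (2 * (A * env \<bar>fst q\<bar>)^2) * stable_kernel1 \<beta> (fst q) * stable_kernel1 \<beta> (snd q) \<partial>(lborel \<Otimes>\<^sub>M lborel))
   \<le> ennreal ((4 * A^2 / \<beta>) * (1 / \<delta> + 1 / \<epsilon>))"
proof -
  define K where "K = 4 * A^2 / \<beta>"
  have Kn: "0 \<le> K" unfolding K_def using beta_pos by simp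
  have m: "(\<lambda>q. indicator {q. \<bar>fst q\<bar> \<le> \<bar>snd q\<bar>} q * ennreal (2 * (A * env \<bar>fst q\<bar>)^2) * stable_kernel1 \<beta> (fst q) * stable_kernel1 \<beta> (snd q)) \<in> borel_measurable (lborel \<Otimes>\<^sub>M (lborel::real measure))"
    by measurable
  have inner: "(\<integral>\<^sup>+b. indicator {q. \<bar>fst q\<bar> \<le> \<bar>snd q\<bar>} (a, b) * ennreal (2 * (A * env \<bar>a\<bar>)^2) * stable_kernel1 \<beta> a * stable_kernel1 \<beta> b \<partial>lborel)
     = ennreal (K * (env \<bar>a\<bar>)^2 * (1 / \<bar>a\<bar> powr (1 + \<beta>)) * \<bar>a\<bar> powr (-\<beta>))" for a
  proof (cases "a = 0")
    case True then show ?thesis by (simp add: env_0)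
  next
    case False
    have "(\<integral>\<^sup>+b. indicator {q. \<bar>fst q\<bar> \<le> \<bar>snd q\<bar>} (a, b) * ennreal (2 * (A * env \<bar>a\<bar>)^2) * stable_kernel1 \<beta> a * stable_kernel1 \<beta> b \<partial>lborel)
       = (\<integral>\<^sup>+b. (ennreal (2 * (A * env \<bar>a\<bar>)^2) * stable_kernel1 \<beta> a) * (indicator {b. \<bar>a\<bar> \<le> \<bar>b\<bar>} b * stable_kernel1 \<beta> b) \<partial>lborel)"
      by (intro nn_integral_cong) (simp add: indicator_def mult_ac)
    also have "\<dots> = (ennreal (2 * (A * env \<bar>a\<bar>)^2) * stable_kernel1 \<beta> a) * (\<integral>\<^sup>+b. indicator {b. \<bar>a\<bar> \<le> \<bar>b\<bar>} b * stable_kernel1 \<beta> b \<partial>lborel)"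
      by (rule nn_integral_cmult) measurable
    also have "(\<integral>\<^sup>+b. indicator {b. \<bar>a\<bar> \<le> \<bar>b\<bar>} b * stable_kernel1 \<beta> b \<partial>lborel) = ennreal (2 * (\<bar>a\<bar> powr (-\<beta>) / \<beta>))"
      using False beta_pos by (intro nn_integral_stable_kernel1_tail) auto
    also have "ennreal (2 * (A * env \<bar>a\<bar>)^2) * stable_kernel1 \<beta> a * ennreal (2 * (\<bar>a\<bar> powr (-\<beta>) / \<beta>))
        = ennreal (2 * (A * env \<bar>a\<bar>)^2 * (1 / \<bar>a\<bar> powr (1 + \<beta>)) * (2 * (\<bar>a\<bar> powr (-\<beta>) / \<beta>)))"
      unfolding stable_kernel1_def using beta_pos by (simp add: ennreal_mult'[symmetric] ennreal_mult[symmetric])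
    also have "2 * (A * env \<bar>a\<bar>)^2 * (1 / \<bar>a\<bar> powr (1 + \<beta>)) * (2 * (\<bar>a\<bar> powr (-\<beta>) / \<beta>))
        = K * (env \<bar>a\<bar>)^2 * (1 / \<bar>a\<bar> powr (1 + \<beta>)) * \<bar>a\<bar> powr (-\<beta>)"
      unfolding K_def by (simp add: power_mult_distrib field_simps)
    finally show ?thesis .
  qed
  have "(\<integral>\<^sup>+q. indicator {q. \<bar>fst q\<bar> \<le> \<bar>snd q\<bar>} q * ennreal (2 * (A * env \<bar>fst q\<bar>)^2) * stable_kernel1 \<beta> (fst q) * stable_kernel1 \<beta> (snd q) \<partial>(lborel \<Otimes>\<^sub>M lborel))
      = (\<integral>\<^sup>+a. \<integral>\<^sup>+b. indicator {q. \<bar>fst q\<bar> \<le> \<bar>snd q\<bar>} (a, b) * ennreal (2 * (A * env \<bar>a\<bar>)^2) * stable_kernel1 \<beta> a * stable_kernel1 \<beta> b \<partial>lborel \<partial>lborel)"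
    using lborel.nn_integral_fst[OF m] by simp
  also have "\<dots> = (\<integral>\<^sup>+a. ennreal (K * (env \<bar>a\<bar>)^2 * (1 / \<bar>a\<bar> powr (1 + \<beta>)) * \<bar>a\<bar> powr (-\<beta>)) \<partial>lborel)"
    by (simp only: inner)
  also have "\<dots> \<le> ennreal (2 * K * (1 / ((2*\<delta> - 1) + 1) + 1 / (- (-1 - 2*\<epsilon>) - 1)))"
    by (rule nn_integral_sq_envelope_le[where ?e1.0="\<beta> + \<delta>" and ?e2.0="\<beta> - \<epsilon>"]) (use env_nonneg env_le Kn delta_pos eps_pos in auto)
  also have "2 * K * (1 / ((2*\<delta> - 1) + 1) + 1 / (- (-1 - 2*\<epsilon>) - 1)) = K * (1 / \<delta> + 1 / \<epsilon>)"
    using delta_pos eps_pos by (simp add: field_simps)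
  finally show ?thesis unfolding K_def .
qed

lemma pair_integral_denv_term: "(\<integral>\<^sup>+q. indicator {q. \<bar>fst q\<bar> \<le> \<bar>snd q\<bar>} q * ennreal (2 * ((fst q)^2 * (A * Cd * denv \<bar>snd q\<bar>)^2)) * stable_kernel1 \<beta> (fst q) * stable_kernel1 \<beta> (snd q) \<partial>(lborel \<Otimes>\<^sub>M lborel))
   \<le> ennreal ((4 * (A * Cd)^2 / (2 - \<beta>)) * (1 / \<delta> + 1 / \<epsilon>))"
proof -
  define K where "K = 4 * (A * Cd)^2 / (2 - \<beta>)"
  have Kn: "0 \<le> K" unfolding K_def using beta_less_2 by simp
  have m: "(\<lambda>q. indicator {q. \<bar>fst q\<bar> \<le> \<bar>snd q\<bar>} q * ennreal (2 * ((fst q)^2 * (A * Cd * denv \<bar>snd q\<bar>)^2)) * stable_kernel1 \<beta> (fst q) * stable_kernel1 \<beta> (snd q)) \<in> borel_measurable (lborel \<Otimes>\<^sub>M (lborel::real measure))"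
    by measurable
  have inner: "(\<integral>\<^sup>+a. indicator {q. \<bar>fst q\<bar> \<le> \<bar>snd q\<bar>} (a, b) * ennreal (2 * (a^2 * (A * Cd * denv \<bar>b\<bar>)^2)) * stable_kernel1 \<beta> a * stable_kernel1 \<beta> b \<partial>lborel)
     = ennreal (K * (denv \<bar>b\<bar>)^2 * (1 / \<bar>b\<bar> powr (1 + \<beta>)) * \<bar>b\<bar> powr (2 - \<beta>))" for b
  proof (cases "b = 0")
    case True then show ?thesis by (simp add: denv_0)
  next
    case False
    have "(\<integral>\<^sup>+a. indicator {q. \<bar>fst q\<bar> \<le> \<bar>snd q\<bar>} (a, b) * ennreal (2 * (a^2 * (A * Cd * denv \<bar>b\<bar>)^2)) * stable_kernel1 \<beta> a * stable_kernel1 \<beta> b \<partial>lborel)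
       = (\<integral>\<^sup>+a. (ennreal (2 * (A * Cd * denv \<bar>b\<bar>)^2) * stable_kernel1 \<beta> b) * (indicator {a. \<bar>a\<bar> \<le> \<bar>b\<bar>} a * ennreal (a^2) * stable_kernel1 \<beta> a) \<partial>lborel)"
      by (intro nn_integral_cong) (simp add: indicator_def mult_ac ennreal_mult'[symmetric])
    also have "\<dots> = (ennreal (2 * (A * Cd * denv \<bar>b\<bar>)^2) * stable_kernel1 \<beta> b) * (\<integral>\<^sup>+a. indicator {a. \<bar>a\<bar> \<le> \<bar>b\<bar>} a * ennreal (a^2) * stable_kernel1 \<beta> a \<partial>lborel)"
      by (rule nn_integral_cmult) measurable
    also have "(\<integral>\<^sup>+a. indicator {a. \<bar>a\<bar> \<le> \<bar>b\<bar>} a * ennreal (a^2) * stable_kernel1 \<beta> a \<partial>lborel) = ennreal (2 * (\<bar>b\<bar> powr (2-\<beta>) / (2-\<beta>)))"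
      using False beta_less_2 by (intro nn_integral_sq_stable_kernel1_core) auto
    also have "ennreal (2 * (A * Cd * denv \<bar>b\<bar>)^2) * stable_kernel1 \<beta> b * ennreal (2 * (\<bar>b\<bar> powr (2-\<beta>) / (2-\<beta>)))
        = ennreal (2 * (A * Cd * denv \<bar>b\<bar>)^2 * (1 / \<bar>b\<bar> powr (1 + \<beta>)) * (2 * (\<bar>b\<bar> powr (2-\<beta>) / (2-\<beta>))))"
      unfolding stable_kernel1_def using beta_less_2 by (simp add: ennreal_mult'[symmetric] ennreal_mult[symmetric])
    also have "2 * (A * Cd * denv \<bar>b\<bar>)^2 * (1 / \<bar>b\<bar> powr (1 + \<beta>)) * (2 * (\<bar>b\<bar> powr (2-\<beta>) / (2-\<beta>)))
        = K * (denv \<bar>b\<bar>)^2 * (1 / \<bar>b\<bar> powr (1 + \<beta>)) * \<bar>b\<bar> powr (2 - \<beta>)"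
      unfolding K_def using beta_less_2 by (simp add: power_mult_distrib field_simps)
    finally show ?thesis .
  qed
  have "(\<integral>\<^sup>+q. indicator {q. \<bar>fst q\<bar> \<le> \<bar>snd q\<bar>} q * ennreal (2 * ((fst q)^2 * (A * Cd * denv \<bar>snd q\<bar>)^2)) * stable_kernel1 \<beta> (fst q) * stable_kernel1 \<beta> (snd q) \<partial>(lborel \<Otimes>\<^sub>M lborel))
      = (\<integral>\<^sup>+a. \<integral>\<^sup>+b. indicator {q. \<bar>fst q\<bar> \<le> \<bar>snd q\<bar>} (a, b) * ennreal (2 * (a^2 * (A * Cd * denv \<bar>b\<bar>)^2)) * stable_kernel1 \<beta> a * stable_kernel1 \<beta> b \<partial>lborel \<partial>lborel)"
    using lborel.nn_integral_fst[OF m] by simp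
  also have "\<dots> = (\<integral>\<^sup>+b. \<integral>\<^sup>+a. indicator {q. \<bar>fst q\<bar> \<le> \<bar>snd q\<bar>} (a, b) * ennreal (2 * (a^2 * (A * Cd * denv \<bar>b\<bar>)^2)) * stable_kernel1 \<beta> a * stable_kernel1 \<beta> b \<partial>lborel \<partial>lborel)"
    by (rule lborel_pair.Fubini'[symmetric]) measurable
  also have "\<dots> = (\<integral>\<^sup>+b. ennreal (K * (denv \<bar>b\<bar>)^2 * (1 / \<bar>b\<bar> powr (1 + \<beta>)) * \<bar>b\<bar> powr (2 - \<beta>)) \<partial>lborel)"
    by (simp only: inner)
  also have "\<dots> \<le> ennreal (2 * K * (1 / ((2*\<delta> - 1) + 1) + 1 / (- (-1 - 2*\<epsilon>) - 1)))"
    by (rule nn_integral_sq_envelope_le[where ?e1.0="\<beta> + \<delta> - 1" and ?e2.0="\<beta> - \<epsilon> - 1"]) (use denv_nonneg denv_le Kn delta_pos eps_pos in auto)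
  also have "2 * K * (1 / ((2*\<delta> - 1) + 1) + 1 / (- (-1 - 2*\<epsilon>) - 1)) = K * (1 / \<delta> + 1 / \<epsilon>)"
    using delta_pos eps_pos by (simp add: field_simps)
  finally show ?thesis unfolding K_def .
qed

lemma pair_integral_diagonal_term: "(\<integral>\<^sup>+q. indicator {q. \<bar>fst q\<bar> \<le> \<bar>snd q\<bar> \<and> \<bar>snd q\<bar> \<le> 2 * \<bar>fst q\<bar>} q * ennreal (2 * (A * 2 powr (\<beta> + \<delta>) * env \<bar>snd q\<bar>)^2) * stable_kernel1 \<beta> (fst q) * stable_kernel1 \<beta> (snd q) \<partial>(lborel \<Otimes>\<^sub>M lborel))
   \<le> ennreal ((4 * (A * 2 powr (\<beta> + \<delta>))^2 * 2 powr \<beta> / \<beta>) * (1 / \<delta> + 1 / \<epsilon>))"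
proof -
  define K where "K = 4 * (A * 2 powr (\<beta> + \<delta>))^2 * 2 powr \<beta> / \<beta>"
  have Kn: "0 \<le> K" unfolding K_def using beta_pos by simp
  have m: "(\<lambda>q. indicator {q. \<bar>fst q\<bar> \<le> \<bar>snd q\<bar> \<and> \<bar>snd q\<bar> \<le> 2 * \<bar>fst q\<bar>} q * ennreal (2 * (A * 2 powr (\<beta> + \<delta>) * env \<bar>snd q\<bar>)^2) * stable_kernel1 \<beta> (fst q) * stable_kernel1 \<beta> (snd q)) \<in> borel_measurable (lborel \<Otimes>\<^sub>M (lborel::real measure))"
    by measurable
  have inner: "(\<integral>\<^sup>+a. indicator {q. \<bar>fst q\<bar> \<le> \<bar>snd q\<bar> \<and> \<bar>snd q\<bar> \<le> 2 * \<bar>fst q\<bar>} (a, b) * ennreal (2 * (A * 2 powr (\<beta> + \<delta>) * env \<bar>b\<bar>)^2) * stable_kernel1 \<beta> a * stable_kernel1 \<beta> b \<partial>lborel)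
     \<le> ennreal (K * (env \<bar>b\<bar>)^2 * (1 / \<bar>b\<bar> powr (1 + \<beta>)) * \<bar>b\<bar> powr (- \<beta>))" for b
  proof (cases "b = 0")
    case True then show ?thesis by (simp add: env_0)
  next
    case False
    have "(\<integral>\<^sup>+a. indicator {q. \<bar>fst q\<bar> \<le> \<bar>snd q\<bar> \<and> \<bar>snd q\<bar> \<le> 2 * \<bar>fst q\<bar>} (a, b) * ennreal (2 * (A * 2 powr (\<beta> + \<delta>) * env \<bar>b\<bar>)^2) * stable_kernel1 \<beta> a * stable_kernel1 \<beta> b \<partial>lborel)
       \<le> (\<integral>\<^sup>+a. (ennreal (2 * (A * 2 powr (\<beta> + \<delta>) * env \<bar>b\<bar>)^2) * stable_kernel1 \<beta> b) * (indicator {a. \<bar>b\<bar> / 2 \<le> \<bar>a\<bar>} a * stable_kernel1 \<beta> a) \<partial>lborel)"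
      by (intro nn_integral_mono) (simp add: indicator_def mult_ac)
    also have "\<dots> = (ennreal (2 * (A * 2 powr (\<beta> + \<delta>) * env \<bar>b\<bar>)^2) * stable_kernel1 \<beta> b) * (\<integral>\<^sup>+a. indicator {a. \<bar>b\<bar> / 2 \<le> \<bar>a\<bar>} a * stable_kernel1 \<beta> a \<partial>lborel)"
      by (rule nn_integral_cmult) measurable
    also have "(\<integral>\<^sup>+a. indicator {a. \<bar>b\<bar> / 2 \<le> \<bar>a\<bar>} a * stable_kernel1 \<beta> a \<partial>lborel) = ennreal (2 * ((\<bar>b\<bar> / 2) powr (-\<beta>) / \<beta>))"
      using False beta_pos by (intro nn_integral_stable_kernel1_tail) auto
    also have "ennreal (2 * (A * 2 powr (\<beta> + \<delta>) * env \<bar>b\<bar>)^2) * stable_kernel1 \<beta> b * ennreal (2 * ((\<bar>b\<bar> / 2) powr (-\<beta>) / \<beta>))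
        = ennreal (2 * (A * 2 powr (\<beta> + \<delta>) * env \<bar>b\<bar>)^2 * (1 / \<bar>b\<bar> powr (1 + \<beta>)) * (2 * ((\<bar>b\<bar> / 2) powr (-\<beta>) / \<beta>)))"
      unfolding stable_kernel1_def using beta_pos by (simp add: ennreal_mult'[symmetric] ennreal_mult[symmetric])
    also have "2 * (A * 2 powr (\<beta> + \<delta>) * env \<bar>b\<bar>)^2 * (1 / \<bar>b\<bar> powr (1 + \<beta>)) * (2 * ((\<bar>b\<bar> / 2) powr (-\<beta>) / \<beta>))
        = K * (env \<bar>b\<bar>)^2 * (1 / \<bar>b\<bar> powr (1 + \<beta>)) * \<bar>b\<bar> powr (- \<beta>)"
    proof -
      have e: "(\<bar>b\<bar> / 2) powr (-\<beta>) = \<bar>b\<bar> powr (-\<beta>) * 2 powr \<beta>"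
        by (simp add: powr_divide powr_minus_divide)
      have alg: "2 * (A * P * m)^2 * W * (2 * ((X * T) / \<beta>)) = 4 * (A * P)^2 * T / \<beta> * m^2 * W * X"
        for P m W X T :: real
        by (simp add: power_mult_distrib)
      show ?thesis unfolding e K_def by (rule alg)
    qed
    finally show ?thesis .
  qed
  have "(\<integral>\<^sup>+q. indicator {q. \<bar>fst q\<bar> \<le> \<bar>snd q\<bar> \<and> \<bar>snd q\<bar> \<le> 2 * \<bar>fst q\<bar>} q * ennreal (2 * (A * 2 powr (\<beta> + \<delta>) * env \<bar>snd q\<bar>)^2) * stable_kernel1 \<beta> (fst q) * stable_kernel1 \<beta> (snd q) \<partial>(lborel \<Otimes>\<^sub>M lborel))
      = (\<integral>\<^sup>+a. \<integral>\<^sup>+b. indicator {q. \<bar>fst q\<bar> \<le> \<bar>snd q\<bar> \<and> \<bar>snd q\<bar> \<le> 2 * \<bar>fst q\<bar>} (a, b) * ennreal (2 * (A * 2 powr (\<beta> + \<delta>) * env \<bar>b\<bar>)^2) * stable_kernel1 \<beta> a * stable_kernel1 \<beta> b \<partial>lborel \<partial>lborel)"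
    using lborel.nn_integral_fst[OF m] by simp
  also have "\<dots> = (\<integral>\<^sup>+b. \<integral>\<^sup>+a. indicator {q. \<bar>fst q\<bar> \<le> \<bar>snd q\<bar> \<and> \<bar>snd q\<bar> \<le> 2 * \<bar>fst q\<bar>} (a, b) * ennreal (2 * (A * 2 powr (\<beta> + \<delta>) * env \<bar>b\<bar>)^2) * stable_kernel1 \<beta> a * stable_kernel1 \<beta> b \<partial>lborel \<partial>lborel)"
    by (rule lborel_pair.Fubini'[symmetric]) measurable
  also have "\<dots> \<le> (\<integral>\<^sup>+b. ennreal (K * (env \<bar>b\<bar>)^2 * (1 / \<bar>b\<bar> powr (1 + \<beta>)) * \<bar>b\<bar> powr (- \<beta>)) \<partial>lborel)"
    by (intro nn_integral_mono inner)
  also have "\<dots> \<le> ennreal (2 * K * (1 / ((2*\<delta> - 1) + 1) + 1 / (- (-1 - 2*\<epsilon>) - 1)))"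
    by (rule nn_integral_sq_envelope_le[where ?e1.0="\<beta> + \<delta>" and ?e2.0="\<beta> - \<epsilon>"]) (use env_nonneg env_le Kn delta_pos eps_pos in auto)
  also have "2 * K * (1 / ((2*\<delta> - 1) + 1) + 1 / (- (-1 - 2*\<epsilon>) - 1)) = K * (1 / \<delta> + 1 / \<epsilon>)"
    using delta_pos eps_pos by (simp add: field_simps)
  finally show ?thesis unfolding K_def .
qed


definition "sdiff_sq q = ennreal ((u (fst q + snd q) - u (fst q) - u (snd q))^2)"
definition "maj1 q = indicator {q. \<bar>fst q\<bar> \<le> \<bar>snd q\<bar>} q * ennreal (2 * (A * env \<bar>fst q\<bar>)^2)"
definition "maj2 q = indicator {q. \<bar>fst q\<bar> \<le> \<bar>snd q\<bar>} q * ennreal (2 * ((fst q)^2 * (A * Cd * denv \<bar>snd q\<bar>)^2))"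
definition "maj3 q = indicator {q. \<bar>fst q\<bar> \<le> \<bar>snd q\<bar> \<and> \<bar>snd q\<bar> \<le> 2 * \<bar>fst q\<bar>} q * ennreal (2 * (A * 2 powr (\<beta> + \<delta>) * env \<bar>snd q\<bar>)^2)"
definition "majorant q = maj1 q + maj2 q + maj3 q"

lemma sdiff_sq_measurable[measurable]: "sdiff_sq \<in> borel_measurable (borel \<Otimes>\<^sub>M borel)" unfolding sdiff_sq_def by measurable
lemma majorant_measurable[measurable]: "majorant \<in> borel_measurable (borel \<Otimes>\<^sub>M borel)"
  unfolding majorant_def maj1_def maj2_def maj3_def by measurable

lemma sdiff_sq_le_majorant: "sdiff_sq q \<le> majorant q + majorant (snd q, fst q)"
proof -
  have main: "sdiff_sq (a, b) \<le> majorant (a, b)" if ab: "\<bar>a\<bar> \<le> \<bar>b\<bar>" for a b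
  proof -
    define X1 where "X1 = 2 * (A * env \<bar>a\<bar>)^2"
    define X2 where "X2 = 2 * (a^2 * (A * Cd * denv \<bar>b\<bar>)^2)"
    define X3 where "X3 = 2 * (if \<bar>b\<bar> \<le> 2 * \<bar>a\<bar> then (A * 2 powr (\<beta> + \<delta>) * env \<bar>b\<bar>)^2 else 0)"
    have "sdiff_sq (a, b) \<le> ennreal (X1 + X2 + X3)"
      unfolding sdiff_sq_def X1_def X2_def X3_def using second_difference_sq_le[OF ab] by (intro ennreal_leI) simp
    also have "\<dots> = ennreal X1 + ennreal X2 + ennreal X3"
      unfolding X1_def X2_def X3_def by (simp add: ennreal_plus)
    also have "\<dots> = majorant (a, b)"
      unfolding majorant_def maj1_def maj2_def maj3_def X1_def X2_def X3_def using ab by (simp add: indicator_def)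
    finally show ?thesis .
  qed
  obtain a b where q: "q = (a, b)" by (cases q)
  show ?thesis
  proof (cases "\<bar>a\<bar> \<le> \<bar>b\<bar>")
    case True
    then show ?thesis using main[OF True] q by (simp add: add_increasing2)
  next
    case False
    then have "\<bar>b\<bar> \<le> \<bar>a\<bar>" by simp
    from main[OF this] have "sdiff_sq (b, a) \<le> majorant (b, a)" .
    moreover have "sdiff_sq (b, a) = sdiff_sq (a, b)" unfolding sdiff_sq_def by (simp add: add.commute algebra_simps)
    ultimately show ?thesis using q by (simp add: add_increasing)
  qed
qed

definition "gamma_integral = (\<integral>\<^sup>+q. sdiff_sq q * stable_kernel1 \<beta> (fst q) * stable_kernel1 \<beta> (snd q) \<partial>(lborel \<Otimes>\<^sub>M lborel))"

lemma gamma_integral_le: "gamma_integral \<le> ennreal (gamma2_const \<beta> \<delta> \<Lambda> * (1 / \<delta> + 1 / \<epsilon>))"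
proof -
  let ?w = "\<lambda>q. stable_kernel1 \<beta> (fst q) * stable_kernel1 \<beta> (snd q)"
  have Pl[measurable]: "majorant \<in> borel_measurable (lborel \<Otimes>\<^sub>M lborel)"
    using majorant_measurable by (simp add: measurable_def space_pair_measure sets_pair_measure)
  have "gamma_integral \<le> (\<integral>\<^sup>+q. (majorant q + majorant (snd q, fst q)) * stable_kernel1 \<beta> (fst q) * stable_kernel1 \<beta> (snd q) \<partial>(lborel \<Otimes>\<^sub>M lborel))"
    unfolding gamma_integral_def by (intro nn_integral_mono mult_right_mono sdiff_sq_le_majorant) auto
  also have "\<dots> = (\<integral>\<^sup>+q. majorant q * stable_kernel1 \<beta> (fst q) * stable_kernel1 \<beta> (snd q) \<partial>(lborel \<Otimes>\<^sub>M lborel)) + (\<integral>\<^sup>+q. majorant (snd q, fst q) * stable_kernel1 \<beta> (fst q) * stable_kernel1 \<beta> (snd q) \<partial>(lborel \<Otimes>\<^sub>M lborel))"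
    by (subst nn_integral_add[symmetric]) (auto simp: distrib_right intro!: nn_integral_cong)
  also have "(\<integral>\<^sup>+q. majorant (snd q, fst q) * stable_kernel1 \<beta> (fst q) * stable_kernel1 \<beta> (snd q) \<partial>(lborel \<Otimes>\<^sub>M lborel)) = (\<integral>\<^sup>+q. majorant q * stable_kernel1 \<beta> (fst q) * stable_kernel1 \<beta> (snd q) \<partial>(lborel \<Otimes>\<^sub>M lborel))"
    by (rule nn_integral_pair_swap) measurable
  also have "(\<integral>\<^sup>+q. majorant q * stable_kernel1 \<beta> (fst q) * stable_kernel1 \<beta> (snd q) \<partial>(lborel \<Otimes>\<^sub>M lborel))
     = (\<integral>\<^sup>+q. maj1 q * stable_kernel1 \<beta> (fst q) * stable_kernel1 \<beta> (snd q) \<partial>(lborel \<Otimes>\<^sub>M lborel)) + (\<integral>\<^sup>+q. maj2 q * stable_kernel1 \<beta> (fst q) * stable_kernel1 \<beta> (snd q) \<partial>(lborel \<Otimes>\<^sub>M lborel))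
       + (\<integral>\<^sup>+q. maj3 q * stable_kernel1 \<beta> (fst q) * stable_kernel1 \<beta> (snd q) \<partial>(lborel \<Otimes>\<^sub>M lborel))"
  proof -
    have m1: "(\<lambda>q. maj1 q * stable_kernel1 \<beta> (fst q) * stable_kernel1 \<beta> (snd q)) \<in> borel_measurable (lborel \<Otimes>\<^sub>M (lborel::real measure))"
      unfolding maj1_def by measurable
    have m2: "(\<lambda>q. maj2 q * stable_kernel1 \<beta> (fst q) * stable_kernel1 \<beta> (snd q)) \<in> borel_measurable (lborel \<Otimes>\<^sub>M (lborel::real measure))"
      unfolding maj2_def by measurable
    have m3: "(\<lambda>q. maj3 q * stable_kernel1 \<beta> (fst q) * stable_kernel1 \<beta> (snd q)) \<in> borel_measurable (lborel \<Otimes>\<^sub>M (lborel::real measure))"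
      unfolding maj3_def by measurable
    have "(\<integral>\<^sup>+q. majorant q * stable_kernel1 \<beta> (fst q) * stable_kernel1 \<beta> (snd q) \<partial>(lborel \<Otimes>\<^sub>M lborel))
       = (\<integral>\<^sup>+q. maj1 q * stable_kernel1 \<beta> (fst q) * stable_kernel1 \<beta> (snd q) + maj2 q * stable_kernel1 \<beta> (fst q) * stable_kernel1 \<beta> (snd q) + maj3 q * stable_kernel1 \<beta> (fst q) * stable_kernel1 \<beta> (snd q) \<partial>(lborel \<Otimes>\<^sub>M lborel))"
      unfolding majorant_def by (intro nn_integral_cong) (simp add: distrib_right)
    also have "\<dots> = (\<integral>\<^sup>+q. maj1 q * stable_kernel1 \<beta> (fst q) * stable_kernel1 \<beta> (snd q) \<partial>(lborel \<Otimes>\<^sub>M lborel)) + (\<integral>\<^sup>+q. maj2 q * stable_kernel1 \<beta> (fst q) * stable_kernel1 \<beta> (snd q) \<partial>(lborel \<Otimes>\<^sub>M lborel))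
       + (\<integral>\<^sup>+q. maj3 q * stable_kernel1 \<beta> (fst q) * stable_kernel1 \<beta> (snd q) \<partial>(lborel \<Otimes>\<^sub>M lborel))"
      by (simp only: nn_integral_add[OF borel_measurable_add[OF m1 m2] m3] nn_integral_add[OF m1 m2])
    finally show ?thesis .
  qed
  also have "(\<integral>\<^sup>+q. maj1 q * stable_kernel1 \<beta> (fst q) * stable_kernel1 \<beta> (snd q) \<partial>(lborel \<Otimes>\<^sub>M lborel)) \<le> ennreal ((4 * A^2 / \<beta>) * (1 / \<delta> + 1 / \<epsilon>))"
    unfolding maj1_def by (rule pair_integral_env_term)
  also have "(\<integral>\<^sup>+q. maj2 q * stable_kernel1 \<beta> (fst q) * stable_kernel1 \<beta> (snd q) \<partial>(lborel \<Otimes>\<^sub>M lborel)) \<le> ennreal ((4 * (A * Cd)^2 / (2 - \<beta>)) * (1 / \<delta> + 1 / \<epsilon>))"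
    unfolding maj2_def by (rule pair_integral_denv_term)
  also have "(\<integral>\<^sup>+q. maj3 q * stable_kernel1 \<beta> (fst q) * stable_kernel1 \<beta> (snd q) \<partial>(lborel \<Otimes>\<^sub>M lborel)) \<le> ennreal ((4 * (A * 2 powr (\<beta> + \<delta>))^2 * 2 powr \<beta> / \<beta>) * (1 / \<delta> + 1 / \<epsilon>))"
    unfolding maj3_def by (rule pair_integral_diagonal_term)
  also have "ennreal ((4 * A^2 / \<beta>) * (1 / \<delta> + 1 / \<epsilon>)) + ennreal ((4 * (A * Cd)^2 / (2 - \<beta>)) * (1 / \<delta> + 1 / \<epsilon>))
        + ennreal ((4 * (A * 2 powr (\<beta> + \<delta>))^2 * 2 powr \<beta> / \<beta>) * (1 / \<delta> + 1 / \<epsilon>))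
      + (ennreal ((4 * A^2 / \<beta>) * (1 / \<delta> + 1 / \<epsilon>)) + ennreal ((4 * (A * Cd)^2 / (2 - \<beta>)) * (1 / \<delta> + 1 / \<epsilon>))
        + ennreal ((4 * (A * 2 powr (\<beta> + \<delta>))^2 * 2 powr \<beta> / \<beta>) * (1 / \<delta> + 1 / \<epsilon>)))
      = ennreal (gamma2_const \<beta> \<delta> \<Lambda> * (1 / \<delta> + 1 / \<epsilon>))"
    unfolding gamma2_const_def A_def[symmetric] Cd_def[symmetric] using beta_pos beta_less_2 delta_pos eps_pos
    by (simp add: ennreal_plus[symmetric] del: ennreal_plus) (simp add: algebra_simps)
  finally show ?thesis by (simp add: add_mono)
qed


lemma second_difference_ne_0: assumes "1 < a" "1 < b" shows "u (a + b) - u a - u b \<noteq> 0"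
  using powr_add_ne[of a b "\<beta> - \<epsilon>"] outside[of a] outside[of b] outside[of "a + b"] assms exponent_ne_1
  by auto

lemma gamma_integral_pos: "0 < gamma_integral"
proof (rule ccontr)
  assume "\<not> 0 < gamma_integral"
  then have zero: "gamma_integral = 0" by (simp add: not_gr_zero)
  define B where "B = {1<..<2::real} \<times> {1<..<2::real}"
  have Bm: "B \<in> sets (lborel \<Otimes>\<^sub>M lborel)" unfolding B_def by auto
  have fm: "(\<lambda>q. sdiff_sq q * stable_kernel1 \<beta> (fst q) * stable_kernel1 \<beta> (snd q)) \<in> borel_measurable (lborel \<Otimes>\<^sub>M (lborel::real measure))"
  proof -
    have "sdiff_sq \<in> borel_measurable (lborel \<Otimes>\<^sub>M lborel)"
      using sdiff_sq_measurable by (simp add: measurable_def space_pair_measure sets_pair_measure)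
    then show ?thesis by measurable
  qed
  have "AE q in lborel \<Otimes>\<^sub>M lborel. sdiff_sq q * stable_kernel1 \<beta> (fst q) * stable_kernel1 \<beta> (snd q) = 0"
    using zero nn_integral_0_iff_AE[OF fm] unfolding gamma_integral_def by simp
  moreover have "sdiff_sq q * stable_kernel1 \<beta> (fst q) * stable_kernel1 \<beta> (snd q) \<noteq> 0" if "q \<in> B" for q
  proof -
    obtain a b where q: "q = (a, b)" "1 < a" "a < 2" "1 < b" "b < 2" using \<open>q \<in> B\<close> unfolding B_def by auto
    have "sdiff_sq q \<noteq> 0" using second_difference_ne_0[of a b] q unfolding sdiff_sq_def by simp
    moreover have "stable_kernel1 \<beta> a \<noteq> 0" "stable_kernel1 \<beta> b \<noteq> 0" using q unfolding stable_kernel1_def by auto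
    ultimately show ?thesis using q by simp
  qed
  ultimately have "AE q in lborel \<Otimes>\<^sub>M lborel. q \<notin> B" by (auto elim!: eventually_mono)
  then have "B \<in> null_sets (lborel \<Otimes>\<^sub>M lborel)"
    using AE_iff_null[of "lborel \<Otimes>\<^sub>M lborel" "\<lambda>q. q \<notin> B"] Bm by (simp add: space_pair_measure)
  then have "emeasure (lborel \<Otimes>\<^sub>M lborel) B = 0" by auto
  moreover have "emeasure (lborel \<Otimes>\<^sub>M lborel) B = 1"
    unfolding B_def by (subst lborel.emeasure_pair_measure_Times) auto
  ultimately show False by simp
qed

definition "laplace_integral = (\<integral>\<^sup>+t. ennreal (2 * u t) * stable_kernel1 \<beta> t \<partial>lborel)"

lemma laplace_integral_ge: "ennreal (2 / \<epsilon>) \<le> laplace_integral"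
proof -
  have "(\<integral>\<^sup>+t. indicator {1..} t * ennreal (t powr (-1-\<epsilon>)) \<partial>lborel) = ennreal (- (1 powr (-1-\<epsilon>+1)) / (-1-\<epsilon>+1))"
    using eps_pos by (intro nn_integral_powr_to_infinity) auto
  also have "\<dots> = ennreal (1 / \<epsilon>)" by simp
  finally have P: "(\<integral>\<^sup>+t. indicator {1..} t * ennreal (t powr (-1-\<epsilon>)) \<partial>lborel) = ennreal (1 / \<epsilon>)" .
  have "ennreal (2 / \<epsilon>) = 2 * ennreal (1 / \<epsilon>)" using eps_pos by (simp add: numeral_mult_ennreal)
  also have "\<dots> = (\<integral>\<^sup>+t. 2 * (indicator {1..} t * ennreal (t powr (-1-\<epsilon>))) \<partial>lborel)"
    unfolding P[symmetric] by (rule nn_integral_cmult[symmetric]) measurable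
  also have "\<dots> \<le> laplace_integral" unfolding laplace_integral_def
  proof (intro nn_integral_mono)
    fix t :: real
    show "2 * (indicator {1..} t * ennreal (t powr (-1-\<epsilon>))) \<le> ennreal (2 * u t) * stable_kernel1 \<beta> t"
    proof (cases "1 \<le> t")
      case True
      have "u t = t powr (\<beta> - \<epsilon>)" using outside[of t] True by simp
      moreover have "t powr (\<beta> - \<epsilon>) * (1 / t powr (1 + \<beta>)) = t powr (-1-\<epsilon>)"
      proof -
        have "t powr (\<beta> - \<epsilon>) * (1 / t powr (1 + \<beta>)) = t powr ((\<beta> - \<epsilon>) - (1 + \<beta>))" by (simp only: powr_diff times_divide_eq_right mult_1_right)
        also have "(\<beta> - \<epsilon>) - (1 + \<beta>) = -1-\<epsilon>" by simp
        finally show ?thesis .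
      qed
      ultimately have "ennreal (2 * u t) * stable_kernel1 \<beta> t = ennreal (2 * t powr (-1-\<epsilon>))"
        unfolding stable_kernel1_def using True by (simp add: ennreal_mult[symmetric] mult.assoc)
      then show ?thesis using True by (simp add: numeral_mult_ennreal)
    qed simp
  qed
  finally show ?thesis .
qed

lemma laplace_integral_finite: "laplace_integral < \<infinity>"
proof -
  have "laplace_integral \<le> ennreal (2 * (2 * A) * (1 / ((\<delta> - 1) + 1) + 1 / (- (-1 - \<epsilon>) - 1)))"
    unfolding laplace_integral_def
  proof (rule nn_integral_le_powr_envelope)
    show "(\<lambda>t. ennreal (2 * u t) * stable_kernel1 \<beta> t) \<in> borel_measurable borel" by measurable
    fix t :: real
    have eq: "ennreal (2 * u t) * stable_kernel1 \<beta> t = ennreal ((2 * A) * (u t / A) * (1 / \<bar>t\<bar> powr (1 + \<beta>)))"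
      unfolding stable_kernel1_def using A_ge u_nonneg[of t] by (simp add: ennreal_mult[symmetric])
    have "u t \<le> A * env \<bar>t\<bar>" using u_le_env[of t] unfolding env_def .
    then have uA: "0 \<le> u t / A" "u t / A \<le> env \<bar>t\<bar>" using A_ge u_nonneg[of t]
      by (auto simp: pos_divide_le_eq mult.commute)
    show "t \<noteq> 0 \<Longrightarrow> \<bar>t\<bar> \<le> 1 \<Longrightarrow> ennreal (2 * u t) * stable_kernel1 \<beta> t \<le> ennreal (2 * A * \<bar>t\<bar> powr (\<delta> - 1))"
    proof -
      assume t: "t \<noteq> 0"
      have "(2 * A) * (u t / A) * (1 / \<bar>t\<bar> powr (1 + \<beta>)) \<le> (2 * A) * \<bar>t\<bar> powr ((\<beta> + \<delta>) - (1 + \<beta>))"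
        using t uA env_le A_ge by (intro mult_powr_le) (auto intro: order_trans)
      then show ?thesis unfolding eq by (intro ennreal_leI) (simp add: algebra_simps)
    qed
    show "1 \<le> \<bar>t\<bar> \<Longrightarrow> ennreal (2 * u t) * stable_kernel1 \<beta> t \<le> ennreal (2 * A * \<bar>t\<bar> powr (-1-\<epsilon>))"
    proof -
      assume t: "1 \<le> \<bar>t\<bar>"
      have "(2 * A) * (u t / A) * (1 / \<bar>t\<bar> powr (1 + \<beta>)) \<le> (2 * A) * \<bar>t\<bar> powr ((\<beta> - \<epsilon>) - (1 + \<beta>))"
        using t uA env_le A_ge by (intro mult_powr_le) (auto intro: order_trans)
      then show ?thesis unfolding eq by (intro ennreal_leI) (simp add: algebra_simps)
    qed
  qed (use A_ge delta_pos eps_pos in auto)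
  also have "\<dots> < \<infinity>" by simp
  finally show ?thesis .
qed


lemma fracL_coordinate:
  fixes i :: "'d::finite" and \<kappa> :: real
  assumes P: "stable_kernel_marginal \<beta> i \<kappa>"
    and k: "\<kappa> > 0"
  shows "fracL \<beta> (\<lambda>x::real^'d. u (x $ i)) 0 = c_const \<beta> CARD('d) * (\<kappa> * enn2real laplace_integral)"
proof -
  let ?f = "\<lambda>h::real^'d. (u ((0 + h) $ i) - 2 * u ((0::real^'d) $ i) + u ((0 - h) $ i)) / norm h powr (real CARD('d) + \<beta>)"
  have fe: "?f h = 2 * u (h $ i) / norm h powr (real CARD('d) + \<beta>)" for h
    using even[of "h $ i"] u_0 by simp
  have fm: "?f \<in> borel_measurable lborel" unfolding fe by measurable
  have fn: "AE h in lborel. 0 \<le> ?f h" unfolding fe using u_nonneg by auto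
  have "(\<integral>h. ?f h \<partial>lborel) = enn2real (\<integral>\<^sup>+h. ennreal (?f h) \<partial>lborel)"
    by (rule integral_eq_nn_integral[OF fm fn])
  also have "(\<integral>\<^sup>+h. ennreal (?f h) \<partial>lborel) = (\<integral>\<^sup>+h. (\<lambda>t. ennreal (2 * u t)) (h$i) * stable_kernel \<beta> h \<partial>lborel)"
    unfolding fe stable_kernel_def using u_nonneg by (intro nn_integral_cong) (simp add: ennreal_mult[symmetric])
  also have "\<dots> = ennreal \<kappa> * laplace_integral"
  proof -
    have gm: "(\<lambda>t. ennreal (2 * u t)) \<in> borel_measurable borel" by measurable
    show ?thesis unfolding laplace_integral_def using P[unfolded stable_kernel_marginal_def, rule_format, OF gm] u_0 by simp
  qed
  also have "enn2real (ennreal \<kappa> * laplace_integral) = \<kappa> * enn2real laplace_integral" using k by (simp add: enn2real_mult)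
  finally show ?thesis unfolding fracL_def by simp
qed

lemma Gamma2_coordinate:
  fixes i :: "'d::finite" and \<kappa> :: real
  assumes P: "stable_kernel_marginal \<beta> i \<kappa>"
    and k: "\<kappa> > 0"
  shows "Gamma2 \<beta> (\<lambda>x::real^'d. u (x $ i)) 0 = (c_const \<beta> CARD('d))^2 * (\<kappa> * \<kappa> * enn2real gamma_integral)"
proof -
  let ?v = "\<lambda>x::real^'d. u (x $ i)"
  let ?f = "\<lambda>p::(real^'d) \<times> (real^'d). (case p of (h, \<sigma>) \<Rightarrow>
        (?v (0 + h + \<sigma>) - ?v (0 + h) - ?v (0 + \<sigma>) + ?v 0)\<^sup>2
        / (norm h powr (real CARD('d) + \<beta>) * norm \<sigma> powr (real CARD('d) + \<beta>)))"
  have fe: "?f p = (u (fst p $ i + snd p $ i) - u (fst p $ i) - u (snd p $ i))^2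
        / (norm (fst p) powr (real CARD('d) + \<beta>) * norm (snd p) powr (real CARD('d) + \<beta>))" for p
    using u_0 by (cases p) simp
  have fm: "?f \<in> borel_measurable (lborel \<Otimes>\<^sub>M lborel)" unfolding fe by measurable
  have fn: "AE p in lborel \<Otimes>\<^sub>M lborel. 0 \<le> ?f p" unfolding fe by auto
  have "(\<integral>p. ?f p \<partial>(lborel \<Otimes>\<^sub>M lborel)) = enn2real (\<integral>\<^sup>+p. ennreal (?f p) \<partial>(lborel \<Otimes>\<^sub>M lborel))"
    by (rule integral_eq_nn_integral[OF fm fn])
  also have "(\<integral>\<^sup>+p. ennreal (?f p) \<partial>(lborel \<Otimes>\<^sub>M lborel))
      = (\<integral>\<^sup>+p. sdiff_sq (fst p $ i, snd p $ i) * stable_kernel \<beta> (fst p) * stable_kernel \<beta> (snd p) \<partial>(lborel \<Otimes>\<^sub>M (lborel :: (real^'d) measure)))"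
    unfolding fe sdiff_sq_def stable_kernel_def
    by (intro nn_integral_cong) (simp add: ennreal_mult[symmetric] ennreal_inverse_mult_real[symmetric] divide_inverse mult_ac)
  also have "\<dots> = ennreal \<kappa> * ennreal \<kappa> * gamma_integral"
    unfolding gamma_integral_def by (rule stable_kernel_marginal_pair[OF P]) (auto simp: sdiff_sq_def u_0)
  also have "enn2real (ennreal \<kappa> * ennreal \<kappa> * gamma_integral) = \<kappa> * \<kappa> * enn2real gamma_integral" using k by (simp add: enn2real_mult)
  finally show ?thesis unfolding Gamma2_def by simp
qed


lemma coordinate_extension_estimates:
  fixes i :: "'d::finite"
  assumes marginal: "stable_kernel_marginal \<beta> i \<kappa>" and \<kappa>: "0 < \<kappa>" and eps_le_1: "\<epsilon> \<le> 1"
  defines "v \<equiv> \<lambda>x::real^'d. u (x $ i)" and "c \<equiv> c_const \<beta> CARD('d)"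
  shows "2 * c * \<kappa> / \<epsilon> \<le> fracL \<beta> v 0"
    and "0 < Gamma2 \<beta> v 0"
    and "Gamma2 \<beta> v 0 \<le> (c * \<kappa>)\<^sup>2 * gamma2_const \<beta> \<delta> \<Lambda> * (1 / \<delta> + 1) / \<epsilon>"
proof -
  have c: "0 < c" unfolding c_def using beta_pos beta_less_2 by (rule c_const_pos)
  have "laplace_integral = ennreal (enn2real laplace_integral)" using laplace_integral_finite by (simp add: ennreal_enn2real less_top)
  then have "ennreal (2 / \<epsilon>) \<le> ennreal (enn2real laplace_integral)" using laplace_integral_ge by simp
  then have "2 / \<epsilon> \<le> enn2real laplace_integral" using eps_pos by (simp add: ennreal_le_iff2)
  then have "c * \<kappa> * (2 / \<epsilon>) \<le> c * \<kappa> * enn2real laplace_integral" using c \<kappa> by (intro mult_left_mono) auto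
  then show "2 * c * \<kappa> / \<epsilon> \<le> fracL \<beta> v 0"
    unfolding v_def fracL_coordinate[OF marginal \<kappa>] c_def[symmetric] by (simp add: mult_ac)
  have gamma_integral_finite: "gamma_integral < \<infinity>" using le_less_trans[OF gamma_integral_le ennreal_less_top] by simp
  then have "0 < enn2real gamma_integral" using gamma_integral_pos by (simp add: enn2real_positive_iff)
  then show "0 < Gamma2 \<beta> v 0"
    unfolding v_def c_def Gamma2_coordinate[OF marginal \<kappa>] using c \<kappa> c_def by simp
  have K: "0 < gamma2_const \<beta> \<delta> \<Lambda>" using beta_pos beta_less_2 by (rule gamma2_const_pos)
  have "ennreal (enn2real gamma_integral) \<le> ennreal (gamma2_const \<beta> \<delta> \<Lambda> * (1 / \<delta> + 1 / \<epsilon>))"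
    using gamma_integral_le gamma_integral_finite by (simp add: ennreal_enn2real less_top)
  then have "enn2real gamma_integral \<le> gamma2_const \<beta> \<delta> \<Lambda> * (1 / \<delta> + 1 / \<epsilon>)"
    using K delta_pos eps_pos by (simp add: ennreal_le_iff)
  also have "\<dots> \<le> gamma2_const \<beta> \<delta> \<Lambda> * ((1 / \<delta> + 1) / \<epsilon>)"
    using K delta_pos eps_pos eps_le_1 by (intro mult_left_mono) (auto simp: field_simps)
  finally have "(c * \<kappa>)\<^sup>2 * enn2real gamma_integral \<le> (c * \<kappa>)\<^sup>2 * (gamma2_const \<beta> \<delta> \<Lambda> * ((1 / \<delta> + 1) / \<epsilon>))"
    by (rule mult_left_mono) simp
  moreover have "Gamma2 \<beta> v 0 = (c * \<kappa>)\<^sup>2 * enn2real gamma_integral"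
    unfolding v_def c_def Gamma2_coordinate[OF marginal \<kappa>] by (simp add: power2_eq_square mult_ac)
  ultimately show "Gamma2 \<beta> v 0 \<le> (c * \<kappa>)\<^sup>2 * gamma2_const \<beta> \<delta> \<Lambda> * (1 / \<delta> + 1) / \<epsilon>"
    by simp
qed

end

theorem theorem3p2:
  fixes \<beta> \<delta> \<Lambda> :: real
    and u :: "real \<Rightarrow> real \<Rightarrow> real"
    and i :: "'d::finite"
  assumes beta: "0 < \<beta>" "\<beta> < 2"
    and dim: "CARD('d) \<ge> 2"
    and Lam: "\<Lambda> > 0" and del: "\<delta> > 0" and bd: "\<beta> + \<delta> > 1"
    and u_C1: "\<And>\<epsilon>. 0 < \<epsilon> \<Longrightarrow> \<epsilon> < \<beta> / 2 \<Longrightarrow> (\<beta> > 1 \<longrightarrow> \<epsilon> < (\<beta> - 1) / 2) \<Longrightarrow>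
                 u \<epsilon> C1_differentiable_on UNIV"
    and u_even: "\<And>\<epsilon> x. 0 < \<epsilon> \<Longrightarrow> \<epsilon> < \<beta> / 2 \<Longrightarrow> (\<beta> > 1 \<longrightarrow> \<epsilon> < (\<beta> - 1) / 2) \<Longrightarrow>
                 u \<epsilon> (- x) = u \<epsilon> x"
    and u_out: "\<And>\<epsilon> x. 0 < \<epsilon> \<Longrightarrow> \<epsilon> < \<beta> / 2 \<Longrightarrow> (\<beta> > 1 \<longrightarrow> \<epsilon> < (\<beta> - 1) / 2) \<Longrightarrow>
                 \<bar>x\<bar> \<ge> 1 \<Longrightarrow> u \<epsilon> x = \<bar>x\<bar> powr (\<beta> - \<epsilon>)"
    and u_in: "\<And>\<epsilon> x. 0 < \<epsilon> \<Longrightarrow> \<epsilon> < \<beta> / 2 \<Longrightarrow> (\<beta> > 1 \<longrightarrow> \<epsilon> < (\<beta> - 1) / 2) \<Longrightarrow>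
                 \<bar>x\<bar> < 1 \<Longrightarrow> 0 \<le> u \<epsilon> x \<and> u \<epsilon> x \<le> \<Lambda> * \<bar>x\<bar> powr (\<beta> + \<delta>)"
    and u_in_deriv: "\<And>\<epsilon> x. 0 < \<epsilon> \<Longrightarrow> \<epsilon> < \<beta> / 2 \<Longrightarrow> (\<beta> > 1 \<longrightarrow> \<epsilon> < (\<beta> - 1) / 2) \<Longrightarrow>
                 \<bar>x\<bar> < 1 \<Longrightarrow> \<bar>deriv (u \<epsilon>) x\<bar> \<le> \<Lambda> * \<bar>x\<bar> powr (\<beta> + \<delta> - 1)"
  shows "(\<exists>C2 > 0. \<exists>C3 > 0. \<exists>\<epsilon>0 > 0. \<forall>\<epsilon>. 0 < \<epsilon> \<and> \<epsilon> < \<epsilon>0 \<longrightarrow>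
            (let v = (\<lambda>x::real^'d. u \<epsilon> (x $ i)) in
               fracL \<beta> v 0 \<ge> C2 / \<epsilon> \<and> 0 < Gamma2 \<beta> v 0 \<and> Gamma2 \<beta> v 0 \<le> C3 / \<epsilon>))
       \<and> (\<forall>\<mu> > 0. \<exists>v :: real^'d \<Rightarrow> real.
            0 < Gamma2 \<beta> v 0 \<and> Gamma2 \<beta> v 0 < \<mu> * (fracL \<beta> v 0)\<^sup>2)"
proof -
  obtain \<kappa> where \<kappa>: "0 < \<kappa>" "stable_kernel_marginal \<beta> i \<kappa>"
    using stable_kernel_marginal_exists[OF beta(1)] by blast
  define c where "c = c_const \<beta> CARD('d)"
  define C2 where "C2 = 2 * c * \<kappa>"
  define C3 where "C3 = (c * \<kappa>)\<^sup>2 * gamma2_const \<beta> \<delta> \<Lambda> * (1 / \<delta> + 1)"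
  define \<epsilon>0 where "\<epsilon>0 = (if 1 < \<beta> then (\<beta> - 1) / 2 else \<beta> / 2)"
  have pos: "0 < C2" "0 < C3" "0 < \<epsilon>0"
    using c_const_pos[OF beta, of "CARD('d)"] \<kappa> gamma2_const_pos[OF beta, where \<delta> = \<delta> and \<Lambda> = \<Lambda>] del beta
    unfolding C2_def C3_def \<epsilon>0_def c_def by (auto intro!: mult_pos_pos add_pos_pos)
  have rates: "C2 / \<epsilon> \<le> fracL \<beta> (\<lambda>x::real^'d. u \<epsilon> (x $ i)) 0
      \<and> 0 < Gamma2 \<beta> (\<lambda>x::real^'d. u \<epsilon> (x $ i)) 0
      \<and> Gamma2 \<beta> (\<lambda>x::real^'d. u \<epsilon> (x $ i)) 0 \<le> C3 / \<epsilon>"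
    if \<epsilon>: "0 < \<epsilon>" "\<epsilon> < \<epsilon>0" for \<epsilon>
  proof -
    have admissible: "\<epsilon> < \<beta> / 2" "\<beta> > 1 \<longrightarrow> \<epsilon> < (\<beta> - 1) / 2"
      using \<epsilon> unfolding \<epsilon>0_def by (auto split: if_splits)
    interpret power_profile \<beta> \<delta> \<Lambda> \<epsilon> "u \<epsilon>"
      using beta del bd \<epsilon>(1) admissible u_C1 u_even u_out u_in u_in_deriv
      by unfold_locales (auto simp: field_simps split: if_splits)
    show ?thesis
      using coordinate_extension_estimates[OF \<kappa>(2,1)] admissible(1) beta(2)
      unfolding C2_def C3_def c_def by simp
  qed
  show ?thesis
    unfolding Let_def using pos rates small_ratio_of_rates[OF pos(3,1) rates] by blast
qed

end
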